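(* The restriction of $\Theta$ to $\mathbf H_{ho}$ is an isomorphism of graded Hopf algebras $\mathbf H_{ho}\to\mathbf{FQSym}$.
   Context: A rooted forest is a finite graph each of whose components is a tree with a distinguished root; edges are oriented towards the roots, and for distinct vertices $v,w$ we write $v\twoheadrightarrow w$ if there is an oriented path from $v$ to $w$. An ordered forest with $n$ vertices is a rooted forest with a total order on its vertices, identifying the vertex set with $\{1,\dots,n\}$ (isomorphic ordered forests identified); it is heap-ordered if $i\twoheadrightarrow j$ implies $i>j$. $\mathbf H_{ho}$ is the $K$-vector space ($K=\mathbb R$ or $\mathbb C$) with basis heap-ordered forests (including the empty forest $1$), graded by number of vertices, with product $\mathbb F\mathbb G$ = disjoint union where the vertices of $\mathbb F$ (with $k$ vertices) keep labels $1..k$ and vertex $j$ of $\mathbb G$ gets label $k+j$, and coproduct $\Delta(\mathbb F)=\sum_{\vec v\models V(\mathbb F)}\mathrm{Roo}_{\vec v}\mathbb F\otimes\mathrm{Lea}_{\vec v}\mathbb F$, where an admissible cut $\vec v$ is a (possibly empty) set of vertices no two of which satisfy $v\twoheadrightarrow w$, $\mathrm{Lea}_{\vec v}\mathbb F$ is the subforest on $\vec v\cup\{w:\exists v\in\vec v, w\twoheadrightarrow v\}$, $\mathrm{Roo}_{\vec v}\mathbb F$ the subforest on the remaining vertices, both ordered by restriction. $\Sigma_n$ is the symmetric group with $(\sigma\circ\tau)(i)=\sigma(\tau(i))$; $(\sigma\otimes\tau)(i)=\sigma(i)$ for $i\le k$ and $k+\tau(i-k)$ for $i>k$ ($\sigma\in\Sigma_k,\tau\in\Sigma_l$);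 $Sh(k,l)=\{\zeta\in\Sigma_{k+l}:\zeta^{-1}(1)<\dots<\zeta^{-1}(k),\ \zeta^{-1}(k+1)<\dots<\zeta^{-1}(k+l)\}$. $\mathbf{FQSym}$ is the graded vector space with basis $\bigsqcup_{n\ge0}\Sigma_n$, product $\sigma\cdot\tau=\sum_{\epsilon\in Sh(k,l)}(\sigma\otimes\tau)\circ\epsilon$, coproduct $\Delta(\sigma)=\sum_{k=0}^n\sigma_1^{(k)}\otimes\sigma_2^{(k)}$ where $\sigma_1^{(k)},\sigma_2^{(k)}$ are the standardizations of the words $(\sigma(1),\dots,\sigma(k))$ and $(\sigma(k+1),\dots,\sigma(n))$. For an ordered forest $\mathbb F$ with $n$ vertices, $S_{\mathbb F}=\{\sigma\in\Sigma_n: i\twoheadrightarrow j\Rightarrow\sigma^{-1}(i)>\sigma^{-1}(j)\}$, and $\Theta(\mathbb F)=\sum_{\sigma\in S_{\mathbb F}}\sigma$, extended linearly. *)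

theory Defs
  imports Main "HOL.Real_Vector_Spaces"
begin

section \<open>Vectors: finitely supported coefficient functions over a basis\<close>

definition vsupp :: "('b \<Rightarrow> 'k::zero) \<Rightarrow> 'b set" where
  "vsupp v = {b. v b \<noteq> 0}"

text \<open>The K-vector space with basis B: finitely supported functions on B.\<close>
definition fvecs :: "'b set \<Rightarrow> ('b \<Rightarrow> 'k::zero) set" where
  "fvecs B = {v. finite (vsupp v) \<and> vsupp v \<subseteq> B}"

definition delta :: "'b \<Rightarrow> 'b \<Rightarrow> 'k::{zero,one}" where
  "delta x = (\<lambda>y. if y = x then 1 else 0)"

definition lext :: "('b \<Rightarrow> 'c \<Rightarrow> 'k::comm_ring_1) \<Rightarrow> ('b \<Rightarrow> 'k) \<Rightarrow> ('c \<Rightarrow> 'k)" where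
  "lext f v = (\<lambda>c. \<Sum>b\<in>vsupp v. v b * f b c)"

definition bext :: "('b \<Rightarrow> 'b \<Rightarrow> 'c \<Rightarrow> 'k::comm_ring_1) \<Rightarrow> ('b \<Rightarrow> 'k) \<Rightarrow> ('b \<Rightarrow> 'k) \<Rightarrow> ('c \<Rightarrow> 'k)" where
  "bext m u v = (\<lambda>c. \<Sum>a\<in>vsupp u. \<Sum>b\<in>vsupp v. u a * v b * m a b c)"

text \<open>Tensor product of two basis-level maps; tensors are vectors on pairs of basis elements.\<close>
definition tens :: "('a \<Rightarrow> 'c \<Rightarrow> 'k::times) \<Rightarrow> ('b \<Rightarrow> 'd \<Rightarrow> 'k) \<Rightarrow> ('a \<times> 'b) \<Rightarrow> ('c \<times> 'd) \<Rightarrow> 'k" where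
  "tens f g = (\<lambda>(a, b) (c, d). f a c * g b d)"

text \<open>An ordered forest with n vertices has vertex set {1..n}; it is encoded by the list
  ps of length n where ps!(i-1) is the parent of vertex i (the vertex the edge out of i
  points to, towards the root), and 0 if i is a root. Isomorphic ordered forests have the
  same encoding, so this identifies isomorphic ordered forests.\<close>

definition fedges :: "nat list \<Rightarrow> (nat \<times> nat) set" where
  "fedges ps = {(i, ps ! (i - 1)) | i. 1 \<le> i \<and> i \<le> length ps \<and> ps ! (i - 1) \<noteq> 0}"

text \<open>reach ps contains (v,w) iff v \<twoheadrightarrow> w (oriented path from v to w).\<close>
definition reach :: "nat list \<Rightarrow> (nat \<times> nat) set" where
  "reach ps = (fedges ps)\<^sup>+"

definition ordered_forest :: "nat list \<Rightarrow> bool" where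
  "ordered_forest ps \<longleftrightarrow> (\<forall>i < length ps. ps ! i \<le> length ps) \<and> (\<forall>v. (v, v) \<notin> reach ps)"

definition heap_ordered :: "nat list \<Rightarrow> bool" where
  "heap_ordered ps \<longleftrightarrow> ordered_forest ps \<and> (\<forall>i j. (i, j) \<in> reach ps \<longrightarrow> i > j)"

text \<open>The basis of H_ho (including the empty forest []).\<close>
definition HO :: "nat list set" where
  "HO = {ps. heap_ordered ps}"

text \<open>Product of forests: disjoint union, vertices of the second forest shifted by k.\<close>
definition fprod :: "nat list \<Rightarrow> nat list \<Rightarrow> nat list" where
  "fprod ps qs = ps @ map (\<lambda>p. if p = 0 then 0 else p + length ps) qs"

definition admissible_cut :: "nat list \<Rightarrow> nat set \<Rightarrow> bool" where
  "admissible_cut ps vs \<longleftrightarrow> vs \<subseteq> {1..length ps} \<and>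
     (\<forall>v\<in>vs. \<forall>w\<in>vs. (v, w) \<notin> reach ps)"

definition lea_set :: "nat list \<Rightarrow> nat set \<Rightarrow> nat set" where
  "lea_set ps vs = vs \<union> {w. \<exists>v\<in>vs. (w, v) \<in> reach ps}"

definition roo_set :: "nat list \<Rightarrow> nat set \<Rightarrow> nat set" where
  "roo_set ps vs = {1..length ps} - lea_set ps vs"

text \<open>Subforest induced on a vertex set S, relabelled by restriction of the order.\<close>
definition restrict_forest :: "nat list \<Rightarrow> nat set \<Rightarrow> nat list" where
  "restrict_forest ps S =
     map (\<lambda>v. let p = ps ! (v - 1) in if p \<in> S then card {u\<in>S. u \<le> p} else 0)
         (sorted_list_of_set S)"

definition Delta_H :: "nat list \<Rightarrow> (nat list \<times> nat list) \<Rightarrow> 'k::comm_ring_1" where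
  "Delta_H ps = (\<lambda>x. of_nat (card {vs. admissible_cut ps vs \<and>
        (restrict_forest ps (roo_set ps vs), restrict_forest ps (lea_set ps vs)) = x}))"

definition mult_H :: "(nat list \<Rightarrow> 'k::comm_ring_1) \<Rightarrow> (nat list \<Rightarrow> 'k) \<Rightarrow> (nat list \<Rightarrow> 'k)" where
  "mult_H u v = bext (\<lambda>F G. delta (fprod F G)) u v"

definition comult_H :: "(nat list \<Rightarrow> 'k::comm_ring_1) \<Rightarrow> (nat list \<times> nat list \<Rightarrow> 'k)" where
  "comult_H u = lext Delta_H u"

text \<open>Counit: linear extension of F \<mapsto> 1 if F is empty, 0 otherwise.\<close>
definition counit :: "(nat list \<Rightarrow> 'k::comm_ring_1) \<Rightarrow> 'k" where
  "counit u = u []"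

text \<open>A permutation sigma of {1..n} is encoded as the list [sigma(1), ..., sigma(n)].\<close>
definition perm_list :: "nat list \<Rightarrow> bool" where
  "perm_list xs \<longleftrightarrow> distinct xs \<and> set xs = {1..length xs}"

definition FQ :: "nat list set" where
  "FQ = {xs. perm_list xs}"

text \<open>pos s i = s^{-1}(i) (1-based position of value i in the list s).\<close>
definition pos :: "nat list \<Rightarrow> nat \<Rightarrow> nat" where
  "pos s i = Suc (LEAST k. k < length s \<and> s ! k = i)"

text \<open>(s o t)(i) = s(t(i)).\<close>
definition pcomp :: "nat list \<Rightarrow> nat list \<Rightarrow> nat list" where
  "pcomp s t = map (\<lambda>i. s ! (i - 1)) t"

definition ptens :: "nat list \<Rightarrow> nat list \<Rightarrow> nat list" where
  "ptens s t = s @ map (\<lambda>x. x + length s) t"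

definition shuffles :: "nat \<Rightarrow> nat \<Rightarrow> nat list set" where
  "shuffles k l = {z. perm_list z \<and> length z = k + l \<and>
      (\<forall>a b. 1 \<le> a \<and> a < b \<and> b \<le> k \<longrightarrow> pos z a < pos z b) \<and>
      (\<forall>a b. k + 1 \<le> a \<and> a < b \<and> b \<le> k + l \<longrightarrow> pos z a < pos z b)}"

definition pprod :: "nat list \<Rightarrow> nat list \<Rightarrow> nat list \<Rightarrow> 'k::comm_ring_1" where
  "pprod s t = (\<lambda>r. of_nat (card {e \<in> shuffles (length s) (length t). pcomp (ptens s t) e = r}))"

definition std :: "nat list \<Rightarrow> nat list" where
  "std w = map (\<lambda>x. card {y \<in> set w. y \<le> x}) w"

definition Delta_FQ :: "nat list \<Rightarrow> (nat list \<times> nat list) \<Rightarrow> 'k::comm_ring_1" where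
  "Delta_FQ s = (\<lambda>x. of_nat (card {k. k \<le> length s \<and> (std (take k s), std (drop k s)) = x}))"

definition mult_FQ :: "(nat list \<Rightarrow> 'k::comm_ring_1) \<Rightarrow> (nat list \<Rightarrow> 'k) \<Rightarrow> (nat list \<Rightarrow> 'k)" where
  "mult_FQ u v = bext pprod u v"

definition comult_FQ :: "(nat list \<Rightarrow> 'k::comm_ring_1) \<Rightarrow> (nat list \<times> nat list \<Rightarrow> 'k)" where
  "comult_FQ u = lext Delta_FQ u"

definition S_F :: "nat list \<Rightarrow> nat list set" where
  "S_F ps = {s. perm_list s \<and> length s = length ps \<and>
      (\<forall>i j. (i, j) \<in> reach ps \<longrightarrow> pos s i > pos s j)}"

definition Theta :: "nat list \<Rightarrow> nat list \<Rightarrow> 'k::comm_ring_1" where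
  "Theta ps = (\<lambda>s. if s \<in> S_F ps then 1 else 0)"

definition Theta_lin :: "(nat list \<Rightarrow> 'k::comm_ring_1) \<Rightarrow> (nat list \<Rightarrow> 'k)" where
  "Theta_lin v = lext Theta v"

end

theory Submission
  imports Defs
begin

text \<open>
  The basic tool is the relation \<open>before w x y\<close> (\<open>x\<close> occurs before \<open>y\<close> in the word \<open>w\<close>):
  \<open>s \<in> S_F\<close> iff every parent occurs in \<open>s\<close> before its children.  Then:
  \<^item> grading, unit and counit are immediate, since \<open>S_F\<close> consists of permutations of size \<open>|F|\<close>
    and \<open>S_\<emptyset> = {\<emptyset>}\<close>;
  \<^item> product: in \<open>\<sigma> \<cdot> \<tau>\<close> a permutation \<open>r\<close> occurs at most once, namely iff it unshuffles
    into \<open>(\<sigma>, \<tau>)\<close>; unshuffling maps \<open>S_{FG}\<close> bijectively onto \<open>S_F \<times> S_G\<close>;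
  \<^item> coproduct: for fixed \<open>(c, d)\<close>, admissible cuts \<open>v\<close> with \<open>c \<in> S_{Roo}\<close>, \<open>d \<in> S_{Lea}\<close>
    are in bijection with pairs \<open>(s, k)\<close>, \<open>s \<in> S_F\<close>, whose two segments at \<open>k\<close> standardize
    to \<open>c\<close> and \<open>d\<close> (the cut is the set of minimal vertices of the final segment);
  \<^item> bijectivity: in degree \<open>n+1\<close> attach the vertex \<open>n+1\<close> to \<open>p\<close> and insert the letter
    \<open>n+1\<close> after position \<open>m\<close>; then \<open>\<Theta>\<close> is triangular (\<open>Theta_ins\<close>) and injectivity and
    surjectivity follow degreewise by induction on \<open>n\<close>.
  The linear-algebra statements are reduced to these basis-level facts by expanding the
  linear extensions over finite supersets of the supports.
\<close>

section \<open>Relative order of letters in a word\<close>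

text \<open>Permutations are words; the statement compares positions \<open>pos s i = s\<inverse>(i)\<close>.  For
  distinct words this is the same as the purely combinatorial relation ``\<open>x\<close> occurs before
  \<open>y\<close>'', which behaves well under appending, filtering and relabelling.\<close>

definition before :: "nat list \<Rightarrow> nat \<Rightarrow> nat \<Rightarrow> bool" where
  "before w x y \<longleftrightarrow> (\<exists>u v. w = u @ v \<and> x \<in> set u \<and> y \<in> set v)"

lemma pos_nth: "distinct w \<Longrightarrow> i < length w \<Longrightarrow> pos w (w!i) = Suc i"
  unfolding pos_def
  by (rule arg_cong[where f=Suc], rule Least_equality) (auto simp: nth_eq_iff_index_eq)

lemma pos_in:
  assumes "distinct w" "x \<in> set w"
  shows "1 \<le> pos w x \<and> pos w x \<le> length w \<and> w!(pos w x - 1) = x"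
proof -
  obtain i where "i < length w" "x = w!i" using assms(2) by (auto simp: in_set_conv_nth)
  thus ?thesis using pos_nth[OF assms(1)] by simp
qed

lemma pos_map:
  assumes "inj_on h (set r)" "distinct r" "x \<in> set r"
  shows "pos (map h r) (h x) = pos r x"
proof -
  obtain i where i: "i < length r" "x = r!i" using assms(3) by (auto simp: in_set_conv_nth)
  have "distinct (map h r)" using assms by (simp add: distinct_map)
  hence "pos (map h r) (map h r ! i) = Suc i" using i pos_nth[of "map h r" i] by simp
  moreover have "pos r (r!i) = Suc i" using i assms pos_nth by simp
  ultimately show ?thesis using i by simp
qed

lemma pos_less_iff_before:
  assumes d: "distinct w" and x: "x \<in> set w" and y: "y \<in> set w"
  shows "pos w x < pos w y \<longleftrightarrow> before w x y"
proof -
  obtain i where i: "i < length w" "x = w!i" using x by (auto simp: in_set_conv_nth)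
  obtain j where j: "j < length w" "y = w!j" using y by (auto simp: in_set_conv_nth)
  have px: "pos w x = Suc i" and py: "pos w y = Suc j" using i j d pos_nth by simp_all
  show ?thesis
  proof
    assume "pos w x < pos w y"
    hence ij: "i < j" using px py by simp
    have "x \<in> set (take j w)" using i ij j by (auto simp: in_set_conv_nth intro!: exI[of _ i])
    moreover have "y \<in> set (drop j w)" using j by (auto simp: in_set_conv_nth intro!: exI[of _ 0])
    ultimately show "before w x y" unfolding before_def by (metis append_take_drop_id)
  next
    assume "before w x y"
    then obtain u v where uv: "w = u @ v" "x \<in> set u" "y \<in> set v" unfolding before_def by blast
    obtain a where a: "a < length u" "x = u!a" using uv by (auto simp: in_set_conv_nth)
    obtain b where b: "b < length v" "y = v!b" using uv by (auto simp: in_set_conv_nth)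
    have "w!a = x" using a uv by (simp add: nth_append)
    hence "a = i" using d i a uv by (simp add: nth_eq_iff_index_eq)
    have "w!(length u + b) = y" using b uv by (simp add: nth_append)
    hence "length u + b = j" using d j b uv nth_eq_iff_index_eq[of w "length u + b" j] by simp
    thus "pos w x < pos w y" using px py \<open>a = i\<close> a by simp
  qed
qed

lemma before_in_set: "before w x y \<Longrightarrow> x \<in> set w \<and> y \<in> set w"
  unfolding before_def by auto

lemma before_asym: "distinct w \<Longrightarrow> before w x y \<Longrightarrow> \<not> before w y x"
proof
  assume a: "distinct w" "before w x y" "before w y x"
  hence "x \<in> set w" "y \<in> set w" using before_in_set by blast+
  hence "pos w x < pos w y" "pos w y < pos w x" using a pos_less_iff_before by blast+
  thus False by simp
qed

lemma before_append_leftI: "before u x y \<Longrightarrow> before (u @ v) x y"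
proof -
  assume "before u x y"
  then obtain u1 v1 where "u = u1 @ v1" "x \<in> set u1" "y \<in> set v1" unfolding before_def by blast
  thus ?thesis unfolding before_def by (intro exI[of _ u1] exI[of _ "v1 @ v"]) auto
qed

lemma before_append_rightI: "before v x y \<Longrightarrow> before (u @ v) x y"
proof -
  assume "before v x y"
  then obtain u1 v1 where "v = u1 @ v1" "x \<in> set u1" "y \<in> set v1" unfolding before_def by blast
  thus ?thesis unfolding before_def by (intro exI[of _ "u @ u1"] exI[of _ v1]) auto
qed

lemma before_appendI: "x \<in> set u \<Longrightarrow> y \<in> set v \<Longrightarrow> before (u @ v) x y"
  unfolding before_def by blast

lemma before_take_drop: "x \<in> set (take k w) \<Longrightarrow> y \<in> set (drop k w) \<Longrightarrow> before w x y"
  unfolding before_def by (metis append_take_drop_id)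

lemma filter_eq_appendD:
  "filter P w = u' @ v' \<Longrightarrow> \<exists>u v. w = u @ v \<and> filter P u = u' \<and> filter P v = v'"
proof (induction w arbitrary: u')
  case Nil thus ?case by auto
next
  case (Cons a w)
  show ?case
  proof (cases "P a")
    case True
    show ?thesis
    proof (cases u')
      case Nil
      thus ?thesis using Cons.prems by (intro exI[of _ "[]"] exI[of _ "a # w"]) auto
    next
      case (Cons b u'')
      with Cons.prems True have "a = b" "filter P w = u'' @ v'" by auto
      from Cons.IH[OF this(2)] obtain u v where "w = u @ v" "filter P u = u''" "filter P v = v'" by blast
      thus ?thesis using True Cons \<open>a = b\<close> by (intro exI[of _ "a # u"] exI[of _ v]) auto
    qed
  next
    case False
    with Cons.prems have "filter P w = u' @ v'" by auto
    from Cons.IH[OF this] obtain u v where "w = u @ v" "filter P u = u'" "filter P v = v'" by blast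
    thus ?thesis using False by (intro exI[of _ "a # u"] exI[of _ v]) auto
  qed
qed

lemma before_filter_iff: "before (filter P w) x y \<longleftrightarrow> before w x y \<and> P x \<and> P y"
proof
  assume "before (filter P w) x y"
  then obtain u' v' where "filter P w = u' @ v'" "x \<in> set u'" "y \<in> set v'" unfolding before_def by blast
  moreover obtain u v where "w = u @ v" "filter P u = u'" "filter P v = v'"
    using filter_eq_appendD[OF calculation(1)] by blast
  ultimately have "x \<in> set u" "P x" "y \<in> set v" "P y" "w = u @ v" by auto
  thus "before w x y \<and> P x \<and> P y" unfolding before_def by blast
next
  assume "before w x y \<and> P x \<and> P y"
  then obtain u v where "w = u @ v" "x \<in> set u" "y \<in> set v" "P x" "P y" unfolding before_def by blast
  thus "before (filter P w) x y" unfolding before_def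
    by (intro exI[of _ "filter P u"] exI[of _ "filter P v"]) auto
qed

lemma before_map: "before w x y \<Longrightarrow> before (map f w) (f x) (f y)"
  unfolding before_def by (metis map_append image_eqI set_map)

lemma before_map_inj:
  assumes "inj_on f (set w)" "x \<in> set w" "y \<in> set w" "before (map f w) (f x) (f y)"
  shows "before w x y"
proof -
  obtain u' v' where uv: "map f w = u' @ v'" "f x \<in> set u'" "f y \<in> set v'"
    using assms(4) unfolding before_def by blast
  then obtain u v where "w = u @ v" "map f u = u'" "map f v = v'" by (auto simp: map_eq_append_conv)
  moreover then obtain x' y' where "x' \<in> set u" "f x' = f x" "y' \<in> set v" "f y' = f y" using uv by auto
  moreover have "x' = x" "y' = y" using assms(1-3) calculation by (auto simp: inj_on_def)
  ultimately show ?thesis unfolding before_def by blast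
qed

lemma before_drop_closed:
  assumes "distinct w" "before w x y" "x \<in> set (drop k w)"
  shows "y \<in> set (drop k w)"
proof (rule ccontr)
  assume "y \<notin> set (drop k w)"
  moreover have "y \<in> set w" using assms before_in_set by blast
  ultimately have "y \<in> set (take k w)" by (metis Un_iff append_take_drop_id set_append)
  hence "before w y x" using assms before_take_drop by blast
  thus False using assms before_asym by blast
qed

lemma before_append_leftD:
  assumes "distinct (u @ v)" "before (u @ v) x y" "x \<in> set u" "y \<in> set u"
  shows "before u x y"
proof -
  have "filter (\<lambda>z. z \<in> set u) (u @ v) = u" using assms(1) by (auto intro: filter_False)
  thus ?thesis using assms before_filter_iff[of "\<lambda>z. z \<in> set u" "u @ v"] by simp
qed

lemma before_append_rightD:
  assumes "distinct (u @ v)" "before (u @ v) x y" "x \<in> set v" "y \<in> set v"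
  shows "before v x y"
proof -
  have "filter (\<lambda>z. z \<in> set v) (u @ v) = v" using assms(1) by (auto intro: filter_False)
  thus ?thesis using assms before_filter_iff[of "\<lambda>z. z \<in> set v" "u @ v"] by simp
qed

lemma perm_list_set: "perm_list s \<Longrightarrow> set s = {1..length s}"
  unfolding perm_list_def by simp

lemma perm_listI:
  assumes "distinct r" "set r \<subseteq> {1..length r}"
  shows "perm_list r"
proof -
  have "card (set r) = length r" using assms distinct_card by blast
  hence "set r = {1..length r}" using assms(2) by (simp add: card_subset_eq)
  thus ?thesis using assms unfolding perm_list_def by simp
qed

section \<open>Forests and their linear extensions\<close>

lemma fedges_iff: "(i, j) \<in> fedges ps \<longleftrightarrow> 1 \<le> i \<and> i \<le> length ps \<and> ps ! (i - 1) \<noteq> 0 \<and> j = ps ! (i - 1)"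
  unfolding fedges_def by auto

lemma fedges_reach: "(i, j) \<in> fedges ps \<Longrightarrow> (i, j) \<in> reach ps"
  unfolding reach_def by auto

lemma reach_induct:
  assumes "\<And>i j. (i, j) \<in> fedges ps \<Longrightarrow> R i j" "\<And>a b c. R a b \<Longrightarrow> R b c \<Longrightarrow> R a c"
    and "(i, j) \<in> reach ps"
  shows "R i j"
  using assms(3) unfolding reach_def
proof (induction rule: trancl_induct)
  case (base y) thus ?case using assms(1) by blast
next
  case (step y z) thus ?case using assms(1,2) by blast
qed

lemma reach_range:
  assumes "(i, j) \<in> reach ps" "\<forall>k < length ps. ps ! k \<le> length ps"
  shows "i \<in> {1..length ps} \<and> j \<in> {1..length ps}"
proof -
  have "(i', j') \<in> fedges ps \<Longrightarrow> i' \<in> {1..length ps} \<and> j' \<in> {1..length ps}" for i' j'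
    using assms(2) by (auto simp: fedges_iff)
  thus ?thesis using reach_induct[of ps "\<lambda>i j. i \<in> {1..length ps} \<and> j \<in> {1..length ps}" i j] assms
    by blast
qed

lemma S_F_iff:
  "s \<in> S_F ps \<longleftrightarrow> perm_list s \<and> length s = length ps \<and>
     (\<forall>i. 1 \<le> i \<and> i \<le> length ps \<and> ps!(i-1) \<noteq> 0 \<longrightarrow> pos s (ps!(i-1)) < pos s i)"
proof -
  have "(\<forall>i j. (i, j) \<in> reach ps \<longrightarrow> pos s i > pos s j) \<longleftrightarrow>
        (\<forall>i. 1 \<le> i \<and> i \<le> length ps \<and> ps!(i-1) \<noteq> 0 \<longrightarrow> pos s (ps!(i-1)) < pos s i)"
  proof
    assume "\<forall>i j. (i, j) \<in> reach ps \<longrightarrow> pos s i > pos s j"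
    thus "\<forall>i. 1 \<le> i \<and> i \<le> length ps \<and> ps!(i-1) \<noteq> 0 \<longrightarrow> pos s (ps!(i-1)) < pos s i"
      using fedges_reach fedges_iff by blast
  next
    assume "\<forall>i. 1 \<le> i \<and> i \<le> length ps \<and> ps!(i-1) \<noteq> 0 \<longrightarrow> pos s (ps!(i-1)) < pos s i"
    thus "\<forall>i j. (i, j) \<in> reach ps \<longrightarrow> pos s i > pos s j"
      using reach_induct[of ps "\<lambda>i j. pos s j < pos s i"] by (auto simp: fedges_iff)
  qed
  thus ?thesis unfolding S_F_def by auto
qed

lemma S_F_before:
  assumes "\<forall>k < length ps. ps ! k \<le> length ps"
  shows "s \<in> S_F ps \<longleftrightarrow> perm_list s \<and> length s = length ps \<and>
     (\<forall>i. 1 \<le> i \<and> i \<le> length ps \<and> ps!(i-1) \<noteq> 0 \<longrightarrow> before s (ps!(i-1)) i)"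
proof -
  { assume p: "perm_list s" "length s = length ps"
    fix i assume i: "1 \<le> i" "i \<le> length ps" "ps!(i-1) \<noteq> 0"
    have "ps!(i-1) \<le> length ps" using assms i by auto
    hence "ps!(i-1) \<in> set s" "i \<in> set s" using p i perm_list_set[of s] by auto
    hence "pos s (ps!(i-1)) < pos s i \<longleftrightarrow> before s (ps!(i-1)) i"
      using p pos_less_iff_before perm_list_def by blast }
  thus ?thesis unfolding S_F_iff by blast
qed

lemma S_F_reach_before:
  assumes "s \<in> S_F ps" "(i, j) \<in> reach ps" "\<forall>k < length ps. ps ! k \<le> length ps"
  shows "before s j i"
proof -
  have "pos s i > pos s j" using assms unfolding S_F_def by blast
  moreover have "i \<in> set s" "j \<in> set s" using reach_range[OF assms(2,3)] assms(1)
    unfolding S_F_def perm_list_def by auto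
  ultimately show ?thesis using assms(1) pos_less_iff_before unfolding S_F_def perm_list_def by blast
qed

lemma heap_ordered_iff: "heap_ordered ps \<longleftrightarrow> (\<forall>i < length ps. ps ! i \<le> i)"
proof
  assume h: "heap_ordered ps"
  show "\<forall>i < length ps. ps ! i \<le> i"
  proof (intro allI impI)
    fix i assume i: "i < length ps"
    show "ps ! i \<le> i"
    proof (cases "ps ! i = 0")
      case False
      hence "(Suc i, ps ! i) \<in> reach ps" using i by (auto simp: fedges_iff intro: fedges_reach)
      hence "ps ! i < Suc i" using h unfolding heap_ordered_def by blast
      thus ?thesis by simp
    qed simp
  qed
next
  assume h: "\<forall>i < length ps. ps ! i \<le> i"
  have "1 \<le> i \<Longrightarrow> i \<le> length ps \<Longrightarrow> ps!(i-1) < i" for i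
    using h[rule_format, of "i - 1"] by linarith
  hence "(i, j) \<in> reach ps \<Longrightarrow> i > j" for i j
    using reach_induct[of ps "\<lambda>i j. j < i" i j] by (auto simp: fedges_iff)
  moreover have "\<forall>i < length ps. ps ! i \<le> length ps" using h by (metis less_imp_le_nat order_trans)
  ultimately show "heap_ordered ps" unfolding heap_ordered_def ordered_forest_def by blast
qed

lemma HO_iff: "ps \<in> HO \<longleftrightarrow> (\<forall>i < length ps. ps ! i \<le> i)"
  unfolding HO_def using heap_ordered_iff by simp

lemma HO_bound: "F \<in> HO \<Longrightarrow> \<forall>k < length F. F ! k \<le> length F"
  using HO_iff by (meson less_imp_le_nat order_trans)

section \<open>Linear extensions of basis maps\<close>

text \<open>The linear and bilinear extensions may be computed over any finite superset of the
  supports; this lets us exchange the order of summation freely.\<close>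
lemma lext_eq:
  assumes "finite A" "vsupp v \<subseteq> A"
  shows "lext f v c = (\<Sum>b\<in>A. v b * f b c)"
  unfolding lext_def
  by (rule sum.mono_neutral_left) (use assms in \<open>auto simp: vsupp_def\<close>)

lemma bext_eq:
  assumes "finite A" "vsupp u \<subseteq> A" "finite B" "vsupp v \<subseteq> B"
  shows "bext m u v c = (\<Sum>a\<in>A. \<Sum>b\<in>B. u a * v b * m a b c)"
proof -
  have "bext m u v c = (\<Sum>a\<in>vsupp u. \<Sum>b\<in>B. u a * v b * m a b c)"
    unfolding bext_def
    by (rule sum.cong[OF refl], rule sum.mono_neutral_left) (use assms in \<open>auto simp: vsupp_def\<close>)
  also have "\<dots> = (\<Sum>a\<in>A. \<Sum>b\<in>B. u a * v b * m a b c)"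
    by (rule sum.mono_neutral_left) (use assms in \<open>auto simp: vsupp_def\<close>)
  finally show ?thesis .
qed

lemma vsupp_lext: "vsupp (lext f v) \<subseteq> (\<Union>b\<in>vsupp v. vsupp (f b))"
proof
  fix c assume "c \<in> vsupp (lext f v)"
  hence "(\<Sum>b\<in>vsupp v. v b * f b c) \<noteq> 0" unfolding vsupp_def lext_def by simp
  then obtain b where "b \<in> vsupp v" "v b * f b c \<noteq> 0" by (meson sum.neutral)
  thus "c \<in> (\<Union>b\<in>vsupp v. vsupp (f b))" unfolding vsupp_def by auto
qed

lemma vsupp_bext: "vsupp (bext m u v) \<subseteq> (\<Union>a\<in>vsupp u. \<Union>b\<in>vsupp v. vsupp (m a b))"
proof
  fix c assume "c \<in> vsupp (bext m u v)"
  hence "(\<Sum>a\<in>vsupp u. \<Sum>b\<in>vsupp v. u a * v b * m a b c) \<noteq> 0" unfolding vsupp_def bext_def by simp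
  then obtain a where "a \<in> vsupp u" "(\<Sum>b\<in>vsupp v. u a * v b * m a b c) \<noteq> 0" by (meson sum.neutral)
  then obtain b where "b \<in> vsupp v" "u a * v b * m a b c \<noteq> 0" by (meson sum.neutral)
  thus "c \<in> (\<Union>a\<in>vsupp u. \<Union>b\<in>vsupp v. vsupp (m a b))" using \<open>a \<in> vsupp u\<close>
    unfolding vsupp_def by fastforce
qed

lemma fvecs_finite: "u \<in> fvecs B \<Longrightarrow> finite (vsupp u)"
  unfolding fvecs_def by simp

lemma fvecs_sub: "u \<in> fvecs B \<Longrightarrow> vsupp u \<subseteq> B"
  unfolding fvecs_def by simp

lemma finite_bounded_len: "finite V \<Longrightarrow> \<exists>N. \<forall>F\<in>V. length (F::nat list) \<le> N"
  by (rule exI[of _ "Max (length ` V)"]) auto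

text \<open>Permutations of size at most \<open>N\<close>: a finite set containing the supports of all
  \<open>\<Theta>(F)\<close> with \<open>|F| \<le> N\<close>.\<close>
definition PL :: "nat \<Rightarrow> nat list set" where
  "PL N = {s. perm_list s \<and> length s \<le> N}"

lemma finite_PL: "finite (PL N)"
proof -
  have "PL N \<subseteq> {xs. set xs \<subseteq> {1..N} \<and> length xs \<le> N}"
    unfolding PL_def perm_list_def by auto
  thus ?thesis using finite_lists_length_le[of "{1..N}" N] finite_subset by blast
qed

lemma S_F_subset_PL: "length F \<le> N \<Longrightarrow> S_F F \<subseteq> PL N"
  unfolding S_F_def PL_def by auto

lemma finite_S_F: "finite (S_F F)"
  using S_F_subset_PL[of F "length F"] finite_PL finite_subset by blast

lemma vsupp_Theta: "vsupp (Theta F :: nat list \<Rightarrow> 'k::comm_ring_1) = S_F F"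
  unfolding vsupp_def Theta_def by auto

lemma Theta_lin_vsupp:
  assumes "finite (vsupp u)" "\<forall>F\<in>vsupp u. length F \<le> N"
  shows "vsupp (Theta_lin u :: nat list \<Rightarrow> 'k::comm_ring_1) \<subseteq> PL N"
proof -
  have "vsupp (Theta_lin u :: nat list \<Rightarrow> 'k) \<subseteq> (\<Union>b\<in>vsupp u. vsupp (Theta b :: nat list \<Rightarrow> 'k))"
    unfolding Theta_lin_def by (rule vsupp_lext)
  also have "\<dots> \<subseteq> PL N" using assms S_F_subset_PL by (auto simp: vsupp_Theta)
  finally show ?thesis .
qed

lemma Theta_lin_eq:
  assumes "finite A" "vsupp u \<subseteq> A"
  shows "Theta_lin u s = (\<Sum>F\<in>A. u F * Theta F s)"
  unfolding Theta_lin_def using lext_eq[OF assms] .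

lemma Theta_sum:
  assumes "finite Q" "S_F a \<subseteq> Q"
  shows "(\<Sum>s\<in>Q. (Theta a s :: 'k::comm_ring_1) * f s) = (\<Sum>s\<in>S_F a. f s)"
proof -
  have "(\<Sum>s\<in>Q. (Theta a s :: 'k) * f s) = (\<Sum>s\<in>Q. if s \<in> S_F a then f s else 0)"
    by (rule sum.cong) (auto simp: Theta_def)
  also have "\<dots> = (\<Sum>s\<in>{s\<in>Q. s \<in> S_F a}. f s)" using assms(1) by (simp add: sum.inter_filter)
  also have "{s\<in>Q. s \<in> S_F a} = S_F a" using assms(2) by auto
  finally show ?thesis .
qed

section \<open>Grading, unit and counit\<close>

lemma Theta_length: "(Theta F s :: 'k::comm_ring_1) \<noteq> 0 \<Longrightarrow> length s = length F"
  unfolding Theta_def S_F_def by (auto split: if_splits)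

lemma S_F_Nil: "S_F [] = {[]}"
  unfolding S_F_def perm_list_def reach_def fedges_def by auto

lemma Nil_in_S_F: "[] \<in> S_F F \<longleftrightarrow> F = []"
  using S_F_Nil unfolding S_F_def by auto

text \<open>\<open>\<Theta>\<close> preserves the unit: the only linear extension of the empty forest is the empty permutation.\<close>
lemma Theta_unit: "Theta_lin (delta [] :: nat list \<Rightarrow> 'k::comm_ring_1) = delta []"
proof
  fix c
  have "Theta_lin (delta [] :: nat list \<Rightarrow> 'k) c = (\<Sum>F\<in>{[]}. delta [] F * Theta F c)"
    by (rule Theta_lin_eq) (auto simp: vsupp_def delta_def)
  also have "\<dots> = delta [] c" by (simp add: delta_def Theta_def S_F_Nil)
  finally show "Theta_lin (delta [] :: nat list \<Rightarrow> 'k) c = delta [] c" .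
qed

text \<open>Only the empty forest contributes to the coefficient of the empty permutation.\<close>
lemma Theta_counit:
  assumes "u \<in> fvecs HO"
  shows "counit (Theta_lin u :: nat list \<Rightarrow> 'k::comm_ring_1) = counit u"
proof -
  let ?A = "insert [] (vsupp u)"
  have "finite ?A" using fvecs_finite[OF assms] by simp
  hence "Theta_lin u [] = (\<Sum>F\<in>?A. u F * Theta F [])" by (rule Theta_lin_eq) auto
  also have "\<dots> = (\<Sum>F\<in>?A. if F = [] then u F else 0)"
    by (rule sum.cong) (auto simp: Theta_def Nil_in_S_F)
  also have "\<dots> = u []" using \<open>finite ?A\<close> by (simp add: sum.delta)
  finally show ?thesis unfolding counit_def .
qed

section \<open>Compatibility with the product\<close>

lemma filter_interval:
  assumes pe: "perm_list e" and ab: "1 \<le> a" "b \<le> length e"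
    and mono: "\<forall>x y. a \<le> x \<and> x < y \<and> y \<le> b \<longrightarrow> pos e x < pos e y"
  shows "filter (\<lambda>i. a \<le> i \<and> i \<le> b) e = [a..<Suc b]"
proof -
  let ?f = "filter (\<lambda>i. a \<le> i \<and> i \<le> b) e"
  have de: "distinct e" using pe perm_list_def by blast
  have df: "distinct ?f" using de by simp
  have sf: "set ?f = {a..b}" using pe ab unfolding perm_list_def by auto
  have "sorted_wrt (<) ?f"
    unfolding sorted_wrt_iff_nth_less
  proof (intro allI impI)
    fix i j assume ij: "i < j" "j < length ?f"
    have mi: "?f!i \<in> {a..b}" "?f!j \<in> {a..b}" using ij sf nth_mem[of i ?f] nth_mem[of j ?f] by auto
    have "?f!i \<noteq> ?f!j" using df ij by (simp add: nth_eq_iff_index_eq)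
    have "pos ?f (?f!i) < pos ?f (?f!j)" using pos_nth[OF df, of i] pos_nth[OF df, of j] ij by simp
    moreover have mem: "?f!i \<in> set ?f" "?f!j \<in> set ?f" using ij by (meson nth_mem less_trans)+
    ultimately have "before ?f (?f!i) (?f!j)"
      using pos_less_iff_before[OF df mem] by blast
    hence "before e (?f!i) (?f!j)" using before_filter_iff by blast
    hence "pos e (?f!i) < pos e (?f!j)" using pos_less_iff_before[OF de] before_in_set by blast
    show "?f!i < ?f!j"
    proof (rule ccontr)
      assume "\<not> ?f!i < ?f!j"
      hence "?f!j < ?f!i" using \<open>?f!i \<noteq> ?f!j\<close> by simp
      hence "pos e (?f!j) < pos e (?f!i)" using mono mi by auto
      thus False using \<open>pos e (?f!i) < pos e (?f!j)\<close> by simp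
    qed
  qed
  hence "sorted ?f" using strict_sorted_iff by blast
  moreover have "sorted [a..<Suc b]" "distinct [a..<Suc b]" "set [a..<Suc b] = {a..b}"
    by (simp_all only: sorted_upt distinct_upt) auto
  ultimately show ?thesis using sorted_distinct_set_unique[of ?f "[a..<Suc b]"] df sf by simp
qed

lemma pos_filter_mono:
  assumes d: "distinct r" and ab: "a < b" "b < length (filter P r)"
  shows "pos r (filter P r ! a) < pos r (filter P r ! b)"
proof -
  let ?f = "filter P r"
  have df: "distinct ?f" using d by simp
  have mem: "?f!a \<in> set ?f" "?f!b \<in> set ?f" using ab by (meson nth_mem less_trans)+
  have "pos ?f (?f!a) < pos ?f (?f!b)" using pos_nth[OF df] ab by simp
  hence "before ?f (?f!a) (?f!b)" using pos_less_iff_before[OF df mem] by blast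
  hence "before r (?f!a) (?f!b)" using before_filter_iff by blast
  thus ?thesis using pos_less_iff_before[OF d] before_in_set by blast
qed

definition shsplit :: "nat \<Rightarrow> nat list \<Rightarrow> nat list \<times> nat list" where
  "shsplit k r = (filter (\<lambda>x. x \<le> k) r, map (\<lambda>x. x - k) (filter (\<lambda>x. k < x) r))"

lemma shsplit_perm:
  assumes pr: "perm_list r" and lr: "length r = k + l"
  shows "perm_list (fst (shsplit k r)) \<and> length (fst (shsplit k r)) = k \<and>
         perm_list (snd (shsplit k r)) \<and> length (snd (shsplit k r)) = l"
proof -
  have sr: "set r = {1..k+l}" "distinct r" using pr lr unfolding perm_list_def by auto
  let ?s = "filter (\<lambda>x. x \<le> k) r"
  let ?f = "filter (\<lambda>x. k < x) r"
  let ?t = "map (\<lambda>x. x - k) ?f"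
  have ss: "set ?s = {1..k}" and ds: "distinct ?s" using sr by auto
  have ls: "length ?s = k" using distinct_card[OF ds] ss by simp
  have sf: "set ?f = {k+1..k+l}" and df: "distinct ?f" using sr by auto
  have lf: "length ?f = l" using distinct_card[OF df] sf by simp
  have "inj_on (\<lambda>x. x - k) (set ?f)" by (rule inj_onI) auto
  hence dt: "distinct ?t" using df by (simp add: distinct_map)
  have "set ?t \<subseteq> {1..length ?t}"
  proof
    fix y assume "y \<in> set ?t"
    then obtain x where x: "x \<in> set ?f" "y = x - k" by auto
    have "x \<in> {k+1..k+l}" using x(1) sf by blast
    thus "y \<in> {1..length ?t}" using x(2) lf by auto
  qed
  thus ?thesis using ds ss ls lf dt perm_listI[OF ds] perm_listI[OF dt] unfolding shsplit_def by simp
qed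

lemma ptens_nth_left: "i \<in> {1..length s} \<Longrightarrow> ptens s t ! (i - 1) = s ! (i - 1)"
  unfolding ptens_def by (auto simp: nth_append)

lemma ptens_nth_right:
  assumes "i \<in> {length s + 1..length s + length t}"
  shows "ptens s t ! (i - 1) = t ! (i - length s - 1) + length s"
proof -
  have "i - 1 = length s + (i - length s - 1)" using assms by auto
  thus ?thesis using assms unfolding ptens_def by (auto simp: nth_append)
qed

lemma ptens_block:
  assumes ps: "perm_list s" and pt: "perm_list t" and i: "i \<in> {1..length s + length t}"
  shows "ptens s t ! (i - 1) \<in> {1..length s + length t} \<and> (ptens s t ! (i - 1) \<le> length s \<longleftrightarrow> i \<le> length s)"
proof (cases "i \<le> length s")
  case True
  hence "s ! (i - 1) \<in> set s" using i by auto
  thus ?thesis using True i ptens_nth_left[of i s t] perm_list_set[OF ps] by auto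
next
  case False
  hence "t ! (i - length s - 1) \<in> set t" using i by auto
  thus ?thesis using False i ptens_nth_right[of i s t] perm_list_set[OF pt] by auto
qed

lemma distinct_ptens: "perm_list s \<Longrightarrow> perm_list t \<Longrightarrow> distinct (ptens s t)"
  unfolding ptens_def perm_list_def by (auto simp: distinct_map inj_on_def)

lemma length_ptens: "length (ptens s t) = length s + length t"
  unfolding ptens_def by simp

lemma ptens_upt_left: "map (\<lambda>i. ptens s t ! (i - 1)) [1..<Suc (length s)] = s"
  by (rule nth_equalityI) (auto simp: nth_upt ptens_def nth_append simp del: upt_Suc)

lemma ptens_upt_right:
  "map (\<lambda>i. ptens s t ! (i - 1) - length s) [Suc (length s)..<Suc (length s + length t)] = t"
proof (rule nth_equalityI)
  fix i assume "i < length (map (\<lambda>i. ptens s t ! (i - 1) - length s) [Suc (length s)..<Suc (length s + length t)])"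
  hence i: "i < length t" by (simp del: upt_Suc)
  thus "map (\<lambda>i. ptens s t ! (i - 1) - length s) [Suc (length s)..<Suc (length s + length t)] ! i = t ! i"
    using ptens_nth_right[of "Suc (length s) + i" s t] by (simp add: nth_upt del: upt_Suc)
qed (simp del: upt_Suc)

lemma ptens_inverse:
  assumes ps: "perm_list s" and pt: "perm_list t" and x: "x \<in> {1..length s + length t}"
  defines "h \<equiv> if x \<le> length s then pos s x else length s + pos t (x - length s)"
  shows "ptens s t ! (h - 1) = x \<and> h \<in> {1..length s + length t}"
proof (cases "x \<le> length s")
  case True
  hence "x \<in> set s" using x perm_list_set[OF ps] by auto
  hence "1 \<le> pos s x \<and> pos s x \<le> length s \<and> s!(pos s x - 1) = x"
    using pos_in ps unfolding perm_list_def by blast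
  thus ?thesis using True ptens_nth_left[of "pos s x" s t] unfolding h_def by auto
next
  case False
  hence "x - length s \<in> set t" using x perm_list_set[OF pt] by auto
  hence "1 \<le> pos t (x - length s) \<and> pos t (x - length s) \<le> length t \<and>
      t!(pos t (x - length s) - 1) = x - length s"
    using pos_in pt unfolding perm_list_def by blast
  thus ?thesis using False ptens_nth_right[of "length s + pos t (x - length s)" s t] unfolding h_def by auto
qed

lemma pcomp_inj:
  assumes "distinct c" "set e \<subseteq> {1..length c}" "set e' \<subseteq> {1..length c}" "pcomp c e = pcomp c e'"
  shows "e = e'"
proof -
  have "inj_on (\<lambda>i. c ! (i - 1)) {1..length c}"
    using assms(1) by (auto simp: inj_on_def nth_eq_iff_index_eq)
  moreover have "set e \<union> set e' \<subseteq> {1..length c}" using assms(2,3) by blast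
  ultimately have "inj_on (\<lambda>i. c ! (i - 1)) (set e \<union> set e')" by (rule inj_on_subset)
  thus ?thesis using assms(4) map_inj_on unfolding pcomp_def by blast
qed

lemma shuffle_unshuffle:
  assumes ps: "perm_list s" and pt: "perm_list t" and e: "e \<in> shuffles (length s) (length t)"
  defines "r \<equiv> pcomp (ptens s t) e"
  shows "perm_list r \<and> length r = length s + length t \<and> shsplit (length s) r = (s, t)"
proof -
  define k where "k = length s"
  define l where "l = length t"
  define n where "n = k + l"
  define g where "g i = ptens s t ! (i - 1)" for i
  have r: "r = map g e" unfolding r_def pcomp_def g_def ..
  have pe: "perm_list e" and se: "set e = {1..n}" "distinct e" "length e = n"
    using e unfolding shuffles_def perm_list_def n_def k_def l_def by auto
  have gr: "g i \<in> {1..n} \<and> (g i \<le> k \<longleftrightarrow> i \<le> k)" if "i \<in> {1..n}" for i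
    using ptens_block[OF ps pt] that unfolding g_def n_def k_def l_def by blast
  have "inj_on g {1..n}"
    using distinct_ptens[OF ps pt] length_ptens[of s t]
    unfolding g_def n_def k_def l_def by (auto simp: inj_on_def nth_eq_iff_index_eq)
  hence "distinct r" using se r by (simp add: distinct_map)
  moreover have "set r \<subseteq> {1..length r}" using r se gr by auto
  ultimately have pr: "perm_list r" by (rule perm_listI)
  have f1: "filter (\<lambda>x. x \<le> k) r = s"
  proof -
    have "filter (\<lambda>x. x \<le> k) r = map g (filter (\<lambda>i. g i \<le> k) e)"
      using r by (simp add: filter_map o_def)
    also have "filter (\<lambda>i. g i \<le> k) e = filter (\<lambda>i. 1 \<le> i \<and> i \<le> k) e"
      by (rule filter_cong) (use se gr in auto)
    also have "filter (\<lambda>i. 1 \<le> i \<and> i \<le> k) e = [1..<Suc k]"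
      by (rule filter_interval[OF pe]) (use e se in \<open>auto simp: shuffles_def n_def k_def l_def\<close>)
    also have "map g [1..<Suc k] = s" unfolding g_def k_def by (rule ptens_upt_left)
    finally show ?thesis .
  qed
  have f2: "map (\<lambda>x. x - k) (filter (\<lambda>x. k < x) r) = t"
  proof -
    have "filter (\<lambda>x. k < x) r = map g (filter (\<lambda>i. k < g i) e)"
      using r by (simp add: filter_map o_def)
    also have "filter (\<lambda>i. k < g i) e = filter (\<lambda>i. k + 1 \<le> i \<and> i \<le> n) e"
      by (rule filter_cong) (use se gr in \<open>auto simp: not_le[symmetric]\<close>)
    also have "filter (\<lambda>i. k + 1 \<le> i \<and> i \<le> n) e = [Suc k..<Suc n]"
      using filter_interval[OF pe, of "k+1" n] e se by (auto simp: shuffles_def n_def k_def l_def)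
    also have "map (\<lambda>x. x - k) (map g [Suc k..<Suc n]) = t"
      using ptens_upt_right[of s t] unfolding g_def k_def l_def n_def by (simp add: o_def del: upt_Suc)
    finally show ?thesis .
  qed
  show ?thesis using pr se r f1 f2 unfolding shsplit_def n_def k_def l_def by simp
qed

text \<open>Conversely every permutation unshuffling to \<open>(\<sigma>, \<tau>)\<close> is \<open>(\<sigma> \<otimes> \<tau>) \<circ> \<epsilon>\<close> for a
  shuffle \<open>\<epsilon>\<close>: take \<open>\<epsilon> = (\<sigma> \<otimes> \<tau>)\<inverse> \<circ> r\<close>.\<close>
lemma unshuffle_shuffle:
  assumes ps: "perm_list s" and pt: "perm_list t"
    and r: "perm_list r" "length r = length s + length t" "shsplit (length s) r = (s, t)"
  shows "\<exists>e \<in> shuffles (length s) (length t). pcomp (ptens s t) e = r"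
proof -
  define k where "k = length s"
  define l where "l = length t"
  define n where "n = k + l"
  have ds: "distinct s" and dt: "distinct t" using ps pt unfolding perm_list_def by auto
  have sr: "set r = {1..n}" "distinct r" "length r = n" using r unfolding perm_list_def n_def k_def l_def by auto
  have f1: "filter (\<lambda>x. x \<le> k) r = s" and f2: "map (\<lambda>x. x - k) (filter (\<lambda>x. k < x) r) = t"
    using r unfolding shsplit_def k_def by auto
  have f2': "filter (\<lambda>x. k < x) r ! j = t ! j + k" if "j < l" for j
  proof -
    have "j < length (filter (\<lambda>x. k < x) r)" using that f2 l_def by auto
    hence "k < filter (\<lambda>x. k < x) r ! j" using nth_mem by fastforce
    thus ?thesis using f2 that \<open>j < length _\<close> by force
  qed
  define h where "h x = (if x \<le> k then pos s x else k + pos t (x - k))" for x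
  have gh: "ptens s t ! (h x - 1) = x \<and> h x \<in> {1..n}" if "x \<in> set r" for x
    using ptens_inverse[OF ps pt, of x] that sr unfolding h_def n_def k_def l_def by auto
  define e where "e = map h r"
  have hinj: "inj_on h (set r)" by (rule inj_onI) (metis gh)
  have ge: "pcomp (ptens s t) e = r" unfolding e_def pcomp_def map_map by (rule map_idI) (use gh in auto)
  have de: "distinct e" unfolding e_def using hinj sr by (simp add: distinct_map)
  have le: "length e = n" using sr e_def by simp
  have pe: "perm_list e" by (rule perm_listI[OF de]) (use gh le in \<open>auto simp: e_def\<close>)
  have pos_e: "pos e (h x) = pos r x" if "x \<in> set r" for x
    unfolding e_def using pos_map[OF hinj sr(2) that] .
  have c1: "pos e a < pos e b" if ab: "1 \<le> a" "a < b" "b \<le> k" for a b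
  proof -
    have m: "a - 1 < length s" "b - 1 < length s" using ab k_def by auto
    have "s!(a-1) \<in> set (filter (\<lambda>x. x \<le> k) r)" "s!(b-1) \<in> set (filter (\<lambda>x. x \<le> k) r)"
      using m f1 by simp_all
    hence xr: "s!(a-1) \<in> set r" "s!(b-1) \<in> set r" by simp_all
    have "h (s!(a-1)) = a" "h (s!(b-1)) = b"
      using m ab pos_nth[OF ds] perm_list_set[OF ps] nth_mem h_def k_def by force+
    moreover have "pos r (s!(a-1)) < pos r (s!(b-1))"
      using pos_filter_mono[OF sr(2), where P = "\<lambda>x. x \<le> k" and a = "a-1" and b = "b-1"] f1 m ab by simp
    ultimately show ?thesis using pos_e xr by metis
  qed
  have c2: "pos e a < pos e b" if ab: "k + 1 \<le> a" "a < b" "b \<le> n" for a b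
  proof -
    have m: "a - k - 1 < l" "b - k - 1 < l" using ab n_def by auto
    have lf: "length (filter (\<lambda>x. k < x) r) = l" using f2 l_def by auto
    have "t!(a-k-1) + k \<in> set (filter (\<lambda>x. k < x) r)" "t!(b-k-1) + k \<in> set (filter (\<lambda>x. k < x) r)"
      using f2' m lf nth_mem by metis+
    hence xr: "t!(a-k-1) + k \<in> set r" "t!(b-k-1) + k \<in> set r" by simp_all
    have "h (t!(a-k-1) + k) = a" "h (t!(b-k-1) + k) = b"
      using m ab pos_nth[OF dt] h_def perm_list_set[OF pt] nth_mem l_def by force+
    moreover have "pos r (t!(a-k-1) + k) < pos r (t!(b-k-1) + k)"
      using pos_filter_mono[OF sr(2), where P = "\<lambda>x. k < x" and a = "a-k-1" and b = "b-k-1"] f2' m ab lf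
      by simp
    ultimately show ?thesis using pos_e xr by metis
  qed
  have "e \<in> shuffles k l" unfolding shuffles_def using pe le c1 c2 n_def by auto
  thus ?thesis using ge k_def l_def by blast
qed

lemma pprod_eq:
  assumes ps: "perm_list s" and pt: "perm_list t"
  shows "(pprod s t r :: 'k::comm_ring_1) =
     (if perm_list r \<and> length r = length s + length t \<and> shsplit (length s) r = (s, t) then 1 else 0)"
proof -
  define E where "E = {e \<in> shuffles (length s) (length t). pcomp (ptens s t) e = r}"
  have shset: "set e \<subseteq> {1..length (ptens s t)}" if "e \<in> shuffles (length s) (length t)" for e
  proof -
    have "perm_list e" "length e = length s + length t" using that by (simp_all add: shuffles_def)
    thus ?thesis by (simp add: perm_list_def length_ptens)
  qed
  have uniq: "e = e'" if "e \<in> E" "e' \<in> E" for e e'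
  proof (rule pcomp_inj[OF distinct_ptens[OF ps pt]])
    show "set e \<subseteq> {1..length (ptens s t)}" "set e' \<subseteq> {1..length (ptens s t)}"
      using that shset unfolding E_def by blast+
    show "pcomp (ptens s t) e = pcomp (ptens s t) e'" using that unfolding E_def by simp
  qed
  have "card E = (if E = {} then 0 else 1)"
  proof (cases "E = {}")
    case False
    then obtain e where "e \<in> E" by blast
    hence "E = {e}" using uniq by blast
    thus ?thesis by simp
  next
    case True
    thus ?thesis unfolding True by simp
  qed
  moreover have "E \<noteq> {} \<longleftrightarrow>
      perm_list r \<and> length r = length s + length t \<and> shsplit (length s) r = (s, t)"
  proof
    assume "E \<noteq> {}"
    then obtain e where "e \<in> shuffles (length s) (length t)" "pcomp (ptens s t) e = r"
      unfolding E_def by blast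
    thus "perm_list r \<and> length r = length s + length t \<and> shsplit (length s) r = (s, t)"
      using shuffle_unshuffle[OF ps pt] by blast
  next
    assume "perm_list r \<and> length r = length s + length t \<and> shsplit (length s) r = (s, t)"
    thus "E \<noteq> {}" using unshuffle_shuffle[OF ps pt] unfolding E_def by blast
  qed
  ultimately have "card E =
      (if perm_list r \<and> length r = length s + length t \<and> shsplit (length s) r = (s, t) then 1 else 0)"
    by (cases "E = {}") auto
  thus ?thesis unfolding pprod_def E_def by simp
qed

lemma length_fprod: "length (fprod F G) = length F + length G"
  unfolding fprod_def by simp

lemma fprod_parent_left: "i \<in> {1..length F} \<Longrightarrow> fprod F G ! (i - 1) = F ! (i - 1)"
  unfolding fprod_def by (auto simp: nth_append)

lemma fprod_parent_right:
  assumes "j \<in> {1..length G}"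
  shows "fprod F G ! (length F + j - 1) = (if G!(j-1) = 0 then 0 else G!(j-1) + length F)"
proof -
  have "length F + j - 1 = length F + (j - 1)" using assms by auto
  thus ?thesis using assms unfolding fprod_def by (auto simp: nth_append)
qed

lemma fprod_HO: assumes "F \<in> HO" "G \<in> HO" shows "fprod F G \<in> HO"
  unfolding HO_iff
proof (intro allI impI)
  fix i assume i: "i < length (fprod F G)"
  show "fprod F G ! i \<le> i"
  proof (cases "i < length F")
    case True thus ?thesis using assms(1) fprod_parent_left[of "Suc i" F G] HO_iff by simp
  next
    case False
    then obtain j where j: "i = length F + j" by (metis le_add_diff_inverse not_less)
    hence "j < length G" using i length_fprod by simp
    thus ?thesis using assms(2) fprod_parent_right[of "Suc j" G F] j HO_iff by simp
  qed
qed

lemma S_F_fprod_edges: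
  assumes F: "F \<in> HO" and G: "G \<in> HO"
  shows "r \<in> S_F (fprod F G) \<longleftrightarrow> perm_list r \<and> length r = length F + length G \<and>
     (\<forall>i. 1 \<le> i \<and> i \<le> length F \<and> F!(i-1) \<noteq> 0 \<longrightarrow> before r (F!(i-1)) i) \<and>
     (\<forall>j. 1 \<le> j \<and> j \<le> length G \<and> G!(j-1) \<noteq> 0 \<longrightarrow>
          before r (G!(j-1) + length F) (length F + j))"
proof -
  define k where "k = length F"
  define l where "l = length G"
  let ?FG = "fprod F G"
  have "(\<forall>i. 1 \<le> i \<and> i \<le> k + l \<and> ?FG!(i-1) \<noteq> 0 \<longrightarrow> before r (?FG!(i-1)) i) \<longleftrightarrow>
        (\<forall>i. 1 \<le> i \<and> i \<le> k \<and> F!(i-1) \<noteq> 0 \<longrightarrow> before r (F!(i-1)) i) \<and>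
        (\<forall>j. 1 \<le> j \<and> j \<le> l \<and> G!(j-1) \<noteq> 0 \<longrightarrow> before r (G!(j-1) + k) (k + j))"
    (is "?A \<longleftrightarrow> ?B \<and> ?C")
  proof
    assume A: ?A
    have ?B using A fprod_parent_left[of _ F G] unfolding k_def by auto
    moreover have ?C
    proof (intro allI impI)
      fix j assume j: "1 \<le> j \<and> j \<le> l \<and> G!(j-1) \<noteq> 0"
      hence "?FG ! (k + j - 1) = G!(j-1) + k" using fprod_parent_right[of j G F] k_def l_def by simp
      thus "before r (G!(j-1) + k) (k + j)" using A[rule_format, of "k + j"] j by simp
    qed
    ultimately show "?B \<and> ?C" by blast
  next
    assume BC: "?B \<and> ?C"
    show ?A
    proof (intro allI impI)
      fix i assume i: "1 \<le> i \<and> i \<le> k + l \<and> ?FG!(i-1) \<noteq> 0"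
      show "before r (?FG!(i-1)) i"
      proof (cases "i \<le> k")
        case True
        thus ?thesis using BC i fprod_parent_left[of i F G] k_def by auto
      next
        case False
        define j where "j = i - k"
        have j: "1 \<le> j" "j \<le> l" "i = k + j" using False i j_def by auto
        hence e: "?FG ! (i - 1) = (if G!(j-1) = 0 then 0 else G!(j-1) + k)"
          using fprod_parent_right[of j G F] k_def l_def by simp
        hence "G!(j-1) \<noteq> 0" using i by (cases "G!(j-1) = 0") simp_all
        thus ?thesis using BC j e by simp
      qed
    qed
  qed
  hence "r \<in> S_F ?FG \<longleftrightarrow> perm_list r \<and> length r = k + l \<and> ?B \<and> ?C"
    using S_F_before[OF HO_bound[OF fprod_HO[OF F G]]] length_fprod k_def l_def by simp
  thus ?thesis unfolding k_def l_def .
qed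

lemma S_F_unshuffle_left:
  assumes F: "F \<in> HO" and r: "perm_list r" "length r = length F + l"
  shows "fst (shsplit (length F) r) \<in> S_F F \<longleftrightarrow>
     (\<forall>i. 1 \<le> i \<and> i \<le> length F \<and> F!(i-1) \<noteq> 0 \<longrightarrow> before r (F!(i-1)) i)"
proof -
  have "before (fst (shsplit (length F) r)) (F!(i-1)) i \<longleftrightarrow> before r (F!(i-1)) i"
    if "1 \<le> i" "i \<le> length F" for i
    using that HO_bound[OF F] before_filter_iff[of "\<lambda>x. x \<le> length F" r]
    unfolding shsplit_def by simp
  thus ?thesis using S_F_before[OF HO_bound[OF F]] shsplit_perm[OF r] by auto
qed

lemma S_F_unshuffle_right:
  assumes G: "G \<in> HO" and r: "perm_list r" "length r = k + length G"
  shows "snd (shsplit k r) \<in> S_F G \<longleftrightarrow>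
     (\<forall>j. 1 \<le> j \<and> j \<le> length G \<and> G!(j-1) \<noteq> 0 \<longrightarrow> before r (G!(j-1) + k) (k + j))"
proof -
  define fr where "fr = filter (\<lambda>x. k < x) r"
  have tr: "snd (shsplit k r) = map (\<lambda>x. x - k) fr" unfolding shsplit_def fr_def by simp
  have "before (map (\<lambda>x. x - k) fr) (G!(j-1)) j \<longleftrightarrow> before r (G!(j-1) + k) (k + j)"
    if j: "1 \<le> j" "j \<le> length G" "G!(j-1) \<noteq> 0" for j
  proof -
    have "G!(j-1) \<le> length G" using HO_bound[OF G] j by simp
    hence inf: "G!(j-1) + k \<in> set fr" "k + j \<in> set fr"
      using perm_list_set[OF r(1)] r(2) j unfolding fr_def by auto
    have "before (map (\<lambda>x. x - k) fr) (G!(j-1)) j \<longleftrightarrow> before fr (G!(j-1) + k) (k + j)"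
    proof
      assume "before (map (\<lambda>x. x - k) fr) (G!(j-1)) j"
      hence "before (map (\<lambda>x. x - k) fr) ((\<lambda>x. x - k) (G!(j-1) + k)) ((\<lambda>x. x - k) (k + j))" by simp
      thus "before fr (G!(j-1) + k) (k + j)"
        by (rule before_map_inj[rotated 3]) (use inf fr_def in \<open>auto simp: inj_on_def\<close>)
    next
      assume "before fr (G!(j-1) + k) (k + j)"
      from before_map[OF this, of "\<lambda>x. x - k"] show "before (map (\<lambda>x. x - k) fr) (G!(j-1)) j"
        by simp
    qed
    also have "\<dots> \<longleftrightarrow> before r (G!(j-1) + k) (k + j)" using before_filter_iff fr_def j by auto
    finally show ?thesis .
  qed
  thus ?thesis using S_F_before[OF HO_bound[OF G]] shsplit_perm[OF r] tr by auto
qed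

lemma S_F_fprod:
  assumes F: "F \<in> HO" and G: "G \<in> HO" and r: "perm_list r" "length r = length F + length G"
  shows "r \<in> S_F (fprod F G) \<longleftrightarrow>
         fst (shsplit (length F) r) \<in> S_F F \<and> snd (shsplit (length F) r) \<in> S_F G"
  using S_F_fprod_edges[OF F G] S_F_unshuffle_left[OF F r] S_F_unshuffle_right[OF G r] r by simp

lemma sum_sum_delta:
  assumes "finite A" "finite B"
  shows "(\<Sum>a\<in>A. \<Sum>b\<in>B. if a = x \<and> b = y then (1::'k::comm_ring_1) else 0) = (if x \<in> A \<and> y \<in> B then 1 else 0)"
proof -
  have "(\<Sum>a\<in>A. \<Sum>b\<in>B. if a = x \<and> b = y then (1::'k) else 0) =
        (\<Sum>a\<in>A. if a = x then (if y \<in> B then 1 else 0) else 0)"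
    by (rule sum.cong[OF refl]) (use assms in \<open>auto simp: sum.delta'\<close>)
  also have "\<dots> = (if x \<in> A \<and> y \<in> B then 1 else 0)" using assms by (simp add: sum.delta')
  finally show ?thesis .
qed

text \<open>On basis elements: \<open>\<Theta>(F) \<cdot> \<Theta>(G) = \<Theta>(FG)\<close>, because each \<open>r \<in> S_{FG}\<close>
  arises from exactly one pair in \<open>S_F \<times> S_G\<close>.\<close>
lemma Theta_fprod:
  assumes F: "F \<in> HO" and G: "G \<in> HO"
  shows "(\<Sum>s\<in>S_F F. \<Sum>t\<in>S_F G. (pprod s t r :: 'k::comm_ring_1)) = Theta (fprod F G) r"
proof -
  have pe: "(pprod s t r :: 'k) =
      (if perm_list r \<and> length r = length F + length G \<and> shsplit (length F) r = (s, t) then 1 else 0)"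
    if "s \<in> S_F F" "t \<in> S_F G" for s t
    using pprod_eq[of s t r] that unfolding S_F_def by auto
  show ?thesis
  proof (cases "perm_list r \<and> length r = length F + length G")
    case True
    obtain s0 t0 where st: "shsplit (length F) r = (s0, t0)" by fastforce
    have "(\<Sum>s\<in>S_F F. \<Sum>t\<in>S_F G. (pprod s t r :: 'k)) =
          (\<Sum>s\<in>S_F F. \<Sum>t\<in>S_F G. if s = s0 \<and> t = t0 then 1 else 0)"
      by (intro sum.cong refl) (use pe True st in auto)
    also have "\<dots> = (if s0 \<in> S_F F \<and> t0 \<in> S_F G then 1 else 0)"
      by (rule sum_sum_delta[OF finite_S_F finite_S_F])
    also have "\<dots> = Theta (fprod F G) r"
      using S_F_fprod[OF F G] True st unfolding Theta_def by simp
    finally show ?thesis .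
  next
    case False
    hence "r \<notin> S_F (fprod F G)" unfolding S_F_def using length_fprod by auto
    moreover have "(\<Sum>s\<in>S_F F. \<Sum>t\<in>S_F G. (pprod s t r :: 'k)) = 0"
      by (intro sum.neutral ballI) (use pe False in auto)
    ultimately show ?thesis unfolding Theta_def by simp
  qed
qed

lemma Theta_lin_mult_H:
  assumes fA: "finite (vsupp u)" and fB: "finite (vsupp v)"
  shows "Theta_lin (mult_H u v :: nat list \<Rightarrow> 'k::comm_ring_1) r =
    (\<Sum>a\<in>vsupp u. \<Sum>b\<in>vsupp v. u a * v b * Theta (fprod a b) r)"
proof -
  define C where "C = (\<lambda>(a, b). fprod a b) ` (vsupp u \<times> vsupp v)"
  have fC: "finite C" using fA fB C_def by simp
  have mH: "(mult_H u v :: nat list \<Rightarrow> 'k) c =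
      (\<Sum>a\<in>vsupp u. \<Sum>b\<in>vsupp v. u a * v b * delta (fprod a b) c)" for c
    unfolding mult_H_def by (rule bext_eq) (use fA fB in auto)
  have "vsupp (mult_H u v :: nat list \<Rightarrow> 'k) \<subseteq>
        (\<Union>a\<in>vsupp u. \<Union>b\<in>vsupp v. vsupp (delta (fprod a b) :: nat list \<Rightarrow> 'k))"
    unfolding mult_H_def by (rule vsupp_bext)
  also have "\<dots> \<subseteq> C" unfolding C_def by (auto simp: vsupp_def delta_def split: if_splits)
  finally have sC: "vsupp (mult_H u v :: nat list \<Rightarrow> 'k) \<subseteq> C" .
  have delta_C: "(\<Sum>c\<in>C. delta (fprod a b) c * (Theta c r :: 'k)) = Theta (fprod a b) r"
    if "a \<in> vsupp u" "b \<in> vsupp v" for a b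
  proof -
    have "fprod a b \<in> C" using that C_def by auto
    have "(\<Sum>c\<in>C. delta (fprod a b) c * (Theta c r :: 'k)) = (\<Sum>c\<in>C. if c = fprod a b then Theta c r else 0)"
      by (rule sum.cong) (auto simp: delta_def)
    thus ?thesis using fC \<open>fprod a b \<in> C\<close> by (simp add: sum.delta')
  qed
  have "Theta_lin (mult_H u v :: nat list \<Rightarrow> 'k) r = (\<Sum>c\<in>C. mult_H u v c * Theta c r)"
    by (rule Theta_lin_eq[OF fC sC])
  also have "\<dots> = (\<Sum>c\<in>C. \<Sum>a\<in>vsupp u. \<Sum>b\<in>vsupp v. u a * v b * (delta (fprod a b) c * Theta c r))"
    by (simp add: mH sum_distrib_right mult.assoc)
  also have "\<dots> = (\<Sum>a\<in>vsupp u. \<Sum>b\<in>vsupp v. \<Sum>c\<in>C. u a * v b * (delta (fprod a b) c * Theta c r))"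
    by (subst sum.swap, rule sum.cong[OF refl], rule sum.swap)
  also have "\<dots> = (\<Sum>a\<in>vsupp u. \<Sum>b\<in>vsupp v. u a * v b * Theta (fprod a b) r)"
    by (intro sum.cong refl) (simp add: delta_C sum_distrib_left[symmetric])
  finally show ?thesis .
qed

lemma sum_product_swap:
  fixes f :: "'a \<Rightarrow> 's \<Rightarrow> 'k::comm_ring_1"
  shows "(\<Sum>s\<in>S. \<Sum>t\<in>T. (\<Sum>a\<in>A. f a s) * (\<Sum>b\<in>B. g b t) * p s t) =
         (\<Sum>a\<in>A. \<Sum>b\<in>B. \<Sum>s\<in>S. \<Sum>t\<in>T. f a s * g b t * p s t)"
proof -
  have "(\<Sum>s\<in>S. \<Sum>t\<in>T. (\<Sum>a\<in>A. f a s) * (\<Sum>b\<in>B. g b t) * p s t) =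
        (\<Sum>s\<in>S. \<Sum>t\<in>T. \<Sum>a\<in>A. \<Sum>b\<in>B. f a s * g b t * p s t)"
    unfolding sum_product unfolding sum_distrib_right ..
  also have "\<dots> = (\<Sum>s\<in>S. \<Sum>a\<in>A. \<Sum>t\<in>T. \<Sum>b\<in>B. f a s * g b t * p s t)"
    by (rule sum.cong[OF refl], rule sum.swap)
  also have "\<dots> = (\<Sum>a\<in>A. \<Sum>s\<in>S. \<Sum>t\<in>T. \<Sum>b\<in>B. f a s * g b t * p s t)"
    by (rule sum.swap)
  also have "\<dots> = (\<Sum>a\<in>A. \<Sum>s\<in>S. \<Sum>b\<in>B. \<Sum>t\<in>T. f a s * g b t * p s t)"
    by (rule sum.cong[OF refl], rule sum.cong[OF refl], rule sum.swap)
  also have "\<dots> = (\<Sum>a\<in>A. \<Sum>b\<in>B. \<Sum>s\<in>S. \<Sum>t\<in>T. f a s * g b t * p s t)"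
    by (rule sum.cong[OF refl], rule sum.swap)
  finally show ?thesis .
qed

lemma mult_FQ_Theta_lin:
  assumes fA: "finite (vsupp u)" and fB: "finite (vsupp v)"
  shows "mult_FQ (Theta_lin u) (Theta_lin v) r =
    (\<Sum>a\<in>vsupp u. \<Sum>b\<in>vsupp v. u a * v b * (\<Sum>s\<in>S_F a. \<Sum>t\<in>S_F b. (pprod s t r :: 'k::comm_ring_1)))"
proof -
  obtain N where N: "\<forall>F\<in>vsupp u \<union> vsupp v. length F \<le> N"
    using finite_bounded_len[of "vsupp u \<union> vsupp v"] fA fB by blast
  define Q where "Q = PL N"
  have fQ: "finite Q" using finite_PL Q_def by simp
  have su: "vsupp (Theta_lin u :: nat list \<Rightarrow> 'k) \<subseteq> Q" "vsupp (Theta_lin v :: nat list \<Rightarrow> 'k) \<subseteq> Q"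
    using Theta_lin_vsupp[of u N] Theta_lin_vsupp[of v N] fA fB N Q_def by auto
  have sa: "S_F a \<subseteq> Q" if "a \<in> vsupp u \<union> vsupp v" for a using S_F_subset_PL N that Q_def by auto
  have "mult_FQ (Theta_lin u) (Theta_lin v) r =
        (\<Sum>s\<in>Q. \<Sum>t\<in>Q. (Theta_lin u :: nat list \<Rightarrow> 'k) s * Theta_lin v t * pprod s t r)"
    unfolding mult_FQ_def by (rule bext_eq[OF fQ su(1) fQ su(2)])
  also have "\<dots> = (\<Sum>s\<in>Q. \<Sum>t\<in>Q. (\<Sum>a\<in>vsupp u. u a * Theta a s) * (\<Sum>b\<in>vsupp v. v b * Theta b t) * pprod s t r)"
    using Theta_lin_eq[OF fA, of u] Theta_lin_eq[OF fB, of v] by simp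
  also have "\<dots> = (\<Sum>a\<in>vsupp u. \<Sum>b\<in>vsupp v. \<Sum>s\<in>Q. \<Sum>t\<in>Q. (u a * Theta a s) * (v b * Theta b t) * pprod s t r)"
    by (rule sum_product_swap)
  also have "\<dots> = (\<Sum>a\<in>vsupp u. \<Sum>b\<in>vsupp v. u a * v b * (\<Sum>s\<in>Q. Theta a s * (\<Sum>t\<in>Q. Theta b t * pprod s t r)))"
    by (simp add: sum_distrib_left mult_ac)
  also have "\<dots> = (\<Sum>a\<in>vsupp u. \<Sum>b\<in>vsupp v. u a * v b * (\<Sum>s\<in>S_F a. \<Sum>t\<in>S_F b. pprod s t r))"
    by (intro sum.cong refl) (simp add: Theta_sum[OF fQ sa] Theta_sum[OF fQ sa])
  finally show ?thesis .
qed

lemma Theta_mult: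
  assumes u: "u \<in> fvecs HO" and v: "v \<in> fvecs HO"
  shows "Theta_lin (mult_H u v :: nat list \<Rightarrow> 'k::comm_ring_1) = mult_FQ (Theta_lin u) (Theta_lin v)"
proof
  fix r
  have "a \<in> vsupp u \<Longrightarrow> b \<in> vsupp v \<Longrightarrow>
      (\<Sum>s\<in>S_F a. \<Sum>t\<in>S_F b. (pprod s t r :: 'k)) = Theta (fprod a b) r" for a b
    using Theta_fprod fvecs_sub[OF u] fvecs_sub[OF v] by blast
  thus "Theta_lin (mult_H u v :: nat list \<Rightarrow> 'k) r = mult_FQ (Theta_lin u) (Theta_lin v) r"
    unfolding Theta_lin_mult_H[OF fvecs_finite[OF u] fvecs_finite[OF v]]
      mult_FQ_Theta_lin[OF fvecs_finite[OF u] fvecs_finite[OF v]]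
    by (intro sum.cong refl) simp
qed

section \<open>Compatibility with the coproduct\<close>

text \<open>\<open>rk S x\<close> is the rank of \<open>x\<close> in \<open>S\<close>; \<open>unstd S\<close> relabels a permutation of \<open>{1..|S|}\<close>
  by the increasing enumeration of \<open>S\<close>, and thereby inverts standardization.\<close>
definition rk :: "nat set \<Rightarrow> nat \<Rightarrow> nat" where
  "rk S x = card {y\<in>S. y \<le> x}"

definition unstd :: "nat set \<Rightarrow> nat list \<Rightarrow> nat list" where
  "unstd S c = map (\<lambda>i. sorted_list_of_set S ! (i - 1)) c"

lemma std_rk: "std w = map (rk (set w)) w"
  unfolding std_def rk_def by simp

lemma rk_nth:
  assumes fS: "finite S" and j: "j < card S"
  shows "rk S (sorted_list_of_set S ! j) = Suc j"
proof -
  let ?L = "sorted_list_of_set S"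
  have dL: "distinct ?L" and sL: "set ?L = S" and lL: "length ?L = card S" using fS by auto
  have lt: "q < length ?L \<Longrightarrow> p < length ?L \<Longrightarrow> p < q \<Longrightarrow> ?L!p < ?L!q" for p q
    using fS strict_sorted_iff sorted_wrt_iff_nth_less by (metis sorted_list_of_set.strict_sorted_key_list_of_set)
  have "{y\<in>S. y \<le> ?L!j} = (\<lambda>q. ?L!q) ` {0..j}"
  proof
    show "{y\<in>S. y \<le> ?L!j} \<subseteq> (\<lambda>q. ?L!q) ` {0..j}"
    proof
      fix y assume y: "y \<in> {y\<in>S. y \<le> ?L!j}"
      then obtain q where q: "q < length ?L" "y = ?L!q" using sL by (metis (no_types, lifting) in_set_conv_nth mem_Collect_eq)
      have "q \<le> j"
      proof (rule ccontr)
        assume "\<not> q \<le> j" hence "?L!j < ?L!q" using lt q j lL by simp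
        thus False using y q by simp
      qed
      thus "y \<in> (\<lambda>q. ?L!q) ` {0..j}" using q by auto
    qed
  next
    show "(\<lambda>q. ?L!q) ` {0..j} \<subseteq> {y\<in>S. y \<le> ?L!j}"
    proof
      fix y assume "y \<in> (\<lambda>q. ?L!q) ` {0..j}"
      then obtain q where q: "q \<le> j" "y = ?L!q" by auto
      have "?L!q \<in> S" using q j lL sL nth_mem by (metis le_less_trans)
      moreover have "?L!q \<le> ?L!j" using q lt j lL by (cases "q = j") (auto intro: less_imp_le)
      ultimately show "y \<in> {y\<in>S. y \<le> ?L!j}" using q by simp
    qed
  qed
  moreover have "inj_on (\<lambda>q. ?L!q) {0..j}"
    using dL j lL by (auto simp: inj_on_def nth_eq_iff_index_eq)
  ultimately show ?thesis unfolding rk_def by (simp add: card_image)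
qed

lemma rk_in:
  assumes "finite S" "x \<in> S"
  shows "rk S x \<in> {1..card S} \<and> sorted_list_of_set S ! (rk S x - 1) = x"
proof -
  have "x \<in> set (sorted_list_of_set S)" using assms by simp
  then obtain j where "j < card S" "x = sorted_list_of_set S ! j"
    by (metis in_set_conv_nth length_sorted_list_of_set)
  thus ?thesis using rk_nth[OF assms(1)] by simp
qed

lemma sorted_list_nth_rk:
  assumes "finite S" "i \<in> {1..card S}"
  shows "sorted_list_of_set S ! (i-1) \<in> S \<and> rk S (sorted_list_of_set S ! (i-1)) = i"
proof -
  have "i - 1 < card S" using assms by auto
  hence "sorted_list_of_set S ! (i-1) \<in> set (sorted_list_of_set S)" using assms(1) by (intro nth_mem) simp
  thus ?thesis using rk_nth[OF assms(1) \<open>i - 1 < card S\<close>] assms by simp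
qed

lemma std_perm:
  assumes d: "distinct w"
  shows "perm_list (std w) \<and> length (std w) = length w"
proof -
  have cS: "card (set w) = length w" using d distinct_card by blast
  have inj: "inj_on (rk (set w)) (set w)"
    by (rule inj_onI) (metis rk_in finite_set)
  have "distinct (std w)" using d inj by (simp add: std_rk distinct_map)
  moreover have "set (std w) \<subseteq> {1..length (std w)}" using rk_in[of "set w"] cS by (auto simp: std_rk)
  ultimately show ?thesis using perm_listI by (simp add: std_rk)
qed

lemma unstd_std:
  assumes "distinct w"
  shows "unstd (set w) (std w) = w"
proof -
  have "map (\<lambda>i. sorted_list_of_set (set w) ! (i - 1)) (map (rk (set w)) w) =
        map (\<lambda>x. sorted_list_of_set (set w) ! (rk (set w) x - 1)) w" by simp
  also have "\<dots> = w" by (rule map_idI) (use rk_in[of "set w"] in simp)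
  finally show ?thesis unfolding unstd_def std_rk .
qed

lemma unstd_props:
  assumes fS: "finite S" and pc: "perm_list c" and lc: "length c = card S"
  shows "distinct (unstd S c) \<and> set (unstd S c) = S \<and> std (unstd S c) = c \<and> length (unstd S c) = card S"
proof -
  define e where "e i = sorted_list_of_set S ! (i - 1)" for i
  have sc: "set c = {1..card S}" using pc lc unfolding perm_list_def by simp
  have dc: "distinct c" using pc unfolding perm_list_def by simp
  have ei: "i \<in> {1..card S} \<Longrightarrow> e i \<in> S \<and> rk S (e i) = i" for i using sorted_list_nth_rk[OF fS] e_def by simp
  have inj: "inj_on e (set c)" by (rule inj_onI) (metis ei sc)
  have u: "unstd S c = map e c" unfolding unstd_def e_def by simp
  have d: "distinct (unstd S c)" using u inj dc by (simp add: distinct_map)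
  have s: "set (unstd S c) = S"
  proof
    show "set (unstd S c) \<subseteq> S" using u ei sc by auto
    show "S \<subseteq> set (unstd S c)"
    proof
      fix x assume x: "x \<in> S"
      hence "rk S x \<in> set c" "e (rk S x) = x" using rk_in[OF fS x] sc e_def by auto
      thus "x \<in> set (unstd S c)" using u by (metis image_eqI set_map)
    qed
  qed
  have "std (unstd S c) = map (rk S) (map e c)" using std_rk s u by metis
  also have "\<dots> = c" by (simp, rule map_idI) (use ei sc in simp)
  finally show ?thesis using d s u lc by simp
qed

lemma restrict_forest_parent:
  assumes fS: "finite S" and i: "i \<in> {1..card S}"
  shows "restrict_forest F S ! (i-1) =
    (let v = sorted_list_of_set S ! (i - 1) in if F!(v - 1) \<in> S then rk S (F!(v - 1)) else 0)"
proof -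
  have "i - 1 < length (sorted_list_of_set S)" using i fS by auto
  thus ?thesis unfolding restrict_forest_def rk_def Let_def by simp
qed

lemma length_restrict_forest: "finite S \<Longrightarrow> length (restrict_forest F S) = card S"
  unfolding restrict_forest_def by simp

lemma S_F_restrict:
  assumes fS: "finite S"
  shows "c \<in> S_F (restrict_forest F S) \<longleftrightarrow> perm_list c \<and> length c = card S \<and>
           (\<forall>v\<in>S. F!(v-1) \<in> S \<longrightarrow> before (unstd S c) (F!(v-1)) v)"
proof -
  define RF where "RF = restrict_forest F S"
  define e where "e i = sorted_list_of_set S ! (i - 1)" for i
  define m where "m = card S"
  have lRF: "length RF = m" unfolding RF_def m_def using length_restrict_forest[OF fS] .
  have RFi: "RF!(i-1) = (if F!(e i - 1) \<in> S then rk S (F!(e i - 1)) else 0)" if "i \<in> {1..m}" for i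
    using restrict_forest_parent[OF fS, of i F] that unfolding RF_def e_def m_def Let_def .
  have ei: "i \<in> {1..m} \<Longrightarrow> e i \<in> S \<and> rk S (e i) = i" for i using sorted_list_nth_rk[OF fS] e_def m_def by simp
  have bound: "\<forall>k < length RF. RF ! k \<le> length RF"
  proof (intro allI impI)
    fix k assume "k < length RF"
    hence "Suc k \<in> {1..m}" using lRF by auto
    thus "RF ! k \<le> length RF" using RFi[of "Suc k"] rk_in[OF fS] lRF m_def by (auto split: if_splits)
  qed
  show ?thesis
  proof (cases "perm_list c \<and> length c = m")
    case False thus ?thesis using lRF m_def unfolding RF_def[symmetric] S_F_def by auto
  next
    case True
    have sc: "set c = {1..m}" using True unfolding perm_list_def by auto
    have inj: "inj_on e (set c)" by (rule inj_onI) (metis ei sc)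
    have u: "unstd S c = map e c" unfolding unstd_def e_def by simp
    have edge: "(1 \<le> i \<and> i \<le> m \<and> RF!(i-1) \<noteq> 0 \<longrightarrow> before c (RF!(i-1)) i) \<longleftrightarrow>
          (i \<in> {1..m} \<longrightarrow> F!(e i - 1) \<in> S \<longrightarrow> before (unstd S c) (F!(e i - 1)) (e i))" for i
    proof (cases "i \<in> {1..m} \<and> F!(e i - 1) \<in> S")
      case True
      define p where "p = F!(e i - 1)"
      have rp: "rk S p \<in> {1..m}" "e (rk S p) = p" using rk_in[OF fS] True p_def e_def m_def by auto
      have "RF!(i-1) = rk S p" using RFi True p_def by simp
      moreover have "before c (rk S p) i \<longleftrightarrow> before (map e c) (e (rk S p)) (e i)"
        using before_map[of c "rk S p" i e] before_map_inj[OF inj] rp True sc by blast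
      ultimately show ?thesis using rp True p_def u by auto
    next
      case False
      thus ?thesis using RFi by auto
    qed
    have "(\<forall>i\<in>{1..m}. F!(e i - 1) \<in> S \<longrightarrow> before (unstd S c) (F!(e i - 1)) (e i)) \<longleftrightarrow>
          (\<forall>v\<in>S. F!(v-1) \<in> S \<longrightarrow> before (unstd S c) (F!(v-1)) v)"
      using ei rk_in[OF fS] unfolding e_def m_def by metis
    thus ?thesis using S_F_before[OF bound] True lRF edge unfolding RF_def m_def by auto
  qed
qed

lemma unstd_S_F_restrict:
  assumes fS: "finite S" and c: "c \<in> S_F (restrict_forest F S)"
  shows "distinct (unstd S c) \<and> set (unstd S c) = S \<and> std (unstd S c) = c \<and>
    length (unstd S c) = card S \<and> (\<forall>v\<in>S. F!(v-1) \<in> S \<longrightarrow> before (unstd S c) (F!(v-1)) v)"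
  using c S_F_restrict[OF fS] unstd_props[OF fS] by blast

lemma std_S_F_restrict:
  assumes d: "distinct u" and edges: "\<forall>v\<in>set u. F!(v-1) \<in> set u \<longrightarrow> before u (F!(v-1)) v"
  shows "std u \<in> S_F (restrict_forest F (set u))"
  unfolding S_F_restrict[OF finite_set]
  using std_perm[OF d] distinct_card[OF d] unstd_std[OF d] edges by simp

definition split_cut :: "nat list \<Rightarrow> nat list \<Rightarrow> nat \<Rightarrow> nat set" where
  "split_cut F s k = {v \<in> set (drop k s). F!(v-1) \<notin> set (drop k s)}"

context
  fixes F :: "nat list"
  assumes HO: "F \<in> HO"
begin

lemma parent_less: assumes "v \<in> {1..length F}" shows "F!(v-1) < v"
proof -
  have "F!(v-1) \<le> v - 1" using HO assms unfolding HO_iff by auto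
  thus ?thesis using assms by auto
qed

lemma parent_in_range: "v \<in> {1..length F} \<Longrightarrow> F!(v-1) \<noteq> 0 \<Longrightarrow> F!(v-1) \<in> {1..length F}"
  using parent_less by fastforce

lemma reach_edge: "v \<in> {1..length F} \<Longrightarrow> F!(v-1) \<noteq> 0 \<Longrightarrow> (v, F!(v-1)) \<in> reach F"
  using fedges_reach fedges_iff by auto

lemma reach_step:
  "(v, w) \<in> reach F \<Longrightarrow> v \<in> {1..length F} \<and> F!(v-1) \<noteq> 0 \<and> (w = F!(v-1) \<or> (F!(v-1), w) \<in> reach F)"
  unfolding reach_def
proof (induction rule: converse_trancl_induct)
  case (base y) thus ?case by (auto simp: fedges_iff)
next
  case (step y z) thus ?case unfolding reach_def[symmetric] by (auto simp: fedges_iff reach_def)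
qed

lemma reach_trans: "(a, b) \<in> reach F \<Longrightarrow> (b, c) \<in> reach F \<Longrightarrow> (a, c) \<in> reach F"
  unfolding reach_def by (rule trancl_trans)

lemma reach_vertices: "(a, b) \<in> reach F \<Longrightarrow> a \<in> {1..length F} \<and> b \<in> {1..length F}"
  using reach_range HO_bound[OF HO] by blast

context
  fixes vs assumes cut: "admissible_cut F vs"
begin

lemma cut_subset: "vs \<subseteq> {1..length F}" and cut_antichain: "v \<in> vs \<Longrightarrow> w \<in> vs \<Longrightarrow> (v, w) \<notin> reach F"
  using cut unfolding admissible_cut_def by auto

lemma lea_subset: "lea_set F vs \<subseteq> {1..length F}"
  unfolding lea_set_def using cut_subset reach_vertices by auto

lemma lea_child: "v \<in> {1..length F} \<Longrightarrow> F!(v-1) \<in> lea_set F vs \<Longrightarrow> v \<in> lea_set F vs"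
proof -
  assume v: "v \<in> {1..length F}" and p: "F!(v-1) \<in> lea_set F vs"
  have "F!(v-1) \<noteq> 0" using p lea_subset by fastforce
  hence e: "(v, F!(v-1)) \<in> reach F" using reach_edge v by blast
  show ?thesis
  proof (cases "F!(v-1) \<in> vs")
    case True thus ?thesis using e unfolding lea_set_def by blast
  next
    case False
    then obtain w where "w \<in> vs" "(F!(v-1), w) \<in> reach F" using p unfolding lea_set_def by blast
    thus ?thesis using e reach_trans unfolding lea_set_def by blast
  qed
qed

lemma roo_parent: "v \<in> roo_set F vs \<Longrightarrow> F!(v-1) \<noteq> 0 \<Longrightarrow> F!(v-1) \<in> roo_set F vs"
  unfolding roo_set_def using lea_child parent_in_range by blast

lemma lea_minimal: "{v \<in> lea_set F vs. F!(v-1) \<notin> lea_set F vs} = vs"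
proof
  show "{v \<in> lea_set F vs. F!(v-1) \<notin> lea_set F vs} \<subseteq> vs"
  proof
    fix v assume v: "v \<in> {v \<in> lea_set F vs. F!(v-1) \<notin> lea_set F vs}"
    show "v \<in> vs"
    proof (rule ccontr)
      assume "v \<notin> vs"
      then obtain w where w: "w \<in> vs" "(v, w) \<in> reach F" using v unfolding lea_set_def by blast
      from reach_step[OF w(2)] have "w = F!(v-1) \<or> (F!(v-1), w) \<in> reach F" by blast
      hence "F!(v-1) \<in> lea_set F vs" using w unfolding lea_set_def by blast
      thus False using v by blast
    qed
  qed
next
  show "vs \<subseteq> {v \<in> lea_set F vs. F!(v-1) \<notin> lea_set F vs}"
  proof
    fix v assume v: "v \<in> vs"
    have "F!(v-1) \<notin> lea_set F vs"
    proof
      assume p: "F!(v-1) \<in> lea_set F vs"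
      have "v \<in> {1..length F}" using v cut_subset by blast
      moreover have "F!(v-1) \<noteq> 0" using p lea_subset by fastforce
      ultimately have e: "(v, F!(v-1)) \<in> reach F" using reach_edge by blast
      then obtain w where "w \<in> vs" "w = F!(v-1) \<or> (F!(v-1), w) \<in> reach F"
        using p unfolding lea_set_def by blast
      thus False using e v cut_antichain reach_trans by blast
    qed
    thus "v \<in> {v \<in> lea_set F vs. F!(v-1) \<notin> lea_set F vs}" using v unfolding lea_set_def by blast
  qed
qed

end

context
  fixes s :: "nat list" and k :: nat assumes sS: "s \<in> S_F F"
begin

lemma S_F_perm: "set s = {1..length F}" "distinct s" "length s = length F"
  using sS unfolding S_F_def perm_list_def by auto

lemma take_drop_disjoint: "set (take k s) \<inter> set (drop k s) = {}"
  using S_F_perm(2) by (metis append_take_drop_id disjoint_iff distinct_append)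

lemma take_drop_union: "set (take k s) \<union> set (drop k s) = {1..length F}"
  using S_F_perm(1) by (metis append_take_drop_id set_append)

lemma S_F_edge: "v \<in> {1..length F} \<Longrightarrow> F!(v-1) \<noteq> 0 \<Longrightarrow> before s (F!(v-1)) v"
  using sS S_F_before[OF HO_bound[OF HO]] by auto

lemma S_F_reach: "(x, y) \<in> reach F \<Longrightarrow> before s y x"
  using S_F_reach_before[OF sS _ HO_bound[OF HO]] by blast

lemma take_closed_before: "before s x y \<Longrightarrow> y \<in> set (take k s) \<Longrightarrow> x \<in> set (take k s)"
proof (rule ccontr)
  assume b: "before s x y" "y \<in> set (take k s)" "x \<notin> set (take k s)"
  have "x \<in> set s" using b before_in_set by blast
  hence "x \<in> set (drop k s)" using b take_drop_union S_F_perm by blast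
  hence "y \<in> set (drop k s)" using before_drop_closed S_F_perm b by blast
  thus False using b take_drop_disjoint by blast
qed

lemma split_cut_admissible: "admissible_cut F (split_cut F s k)"
  unfolding admissible_cut_def
proof (intro conjI ballI)
  show "split_cut F s k \<subseteq> {1..length F}" unfolding split_cut_def using take_drop_union by blast
next
  fix v w assume vw: "v \<in> split_cut F s k" "w \<in> split_cut F s k"
  show "(v, w) \<notin> reach F"
  proof
    assume r: "(v, w) \<in> reach F"
    from reach_step[OF r] have st: "w = F!(v-1) \<or> (F!(v-1), w) \<in> reach F" by auto
    have pv: "F!(v-1) \<notin> set (drop k s)" using vw split_cut_def by blast
    show False
    proof (cases "w = F!(v-1)")
      case True thus False using pv vw split_cut_def by blast
    next
      case False
      hence r2: "(F!(v-1), w) \<in> reach F" using st by blast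
      have "F!(v-1) \<in> {1..length F}" using reach_vertices r2 by blast
      hence "F!(v-1) \<in> set (take k s)" using pv take_drop_union by blast
      moreover have "before s w (F!(v-1))" using S_F_reach r2 by blast
      ultimately have "w \<in> set (take k s)" using take_closed_before by blast
      thus False using vw split_cut_def take_drop_disjoint by blast
    qed
  qed
qed

lemma split_cut_lea: "lea_set F (split_cut F s k) = set (drop k s)"
proof
  show "lea_set F (split_cut F s k) \<subseteq> set (drop k s)"
  proof
    fix w assume "w \<in> lea_set F (split_cut F s k)"
    hence "w \<in> split_cut F s k \<or> (\<exists>v\<in>split_cut F s k. (w, v) \<in> reach F)" unfolding lea_set_def by blast
    thus "w \<in> set (drop k s)"
    proof
      assume "\<exists>v\<in>split_cut F s k. (w, v) \<in> reach F"
      then obtain v where "v \<in> split_cut F s k" "(w, v) \<in> reach F" by blast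
      thus ?thesis using S_F_reach before_drop_closed S_F_perm split_cut_def by blast
    qed (simp add: split_cut_def)
  qed
next
  text \<open>By strong induction on the vertex: follow parents until leaving the final segment.\<close>
  have "v \<in> set (drop k s) \<longrightarrow> v \<in> split_cut F s k \<or> (\<exists>w\<in>split_cut F s k. (v, w) \<in> reach F)" for v
  proof (induction v rule: less_induct)
    case (less v)
    show ?case
    proof
      assume v: "v \<in> set (drop k s)"
      show "v \<in> split_cut F s k \<or> (\<exists>w\<in>split_cut F s k. (v, w) \<in> reach F)"
      proof (cases "F!(v-1) \<in> set (drop k s)")
        case False thus ?thesis using v split_cut_def by blast
      next
        case True
        have vr: "v \<in> {1..length F}" using v take_drop_union by blast
        have "F!(v-1) \<noteq> 0" using True take_drop_union by fastforce
        hence e: "(v, F!(v-1)) \<in> reach F" using reach_edge vr by blast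
        have "F!(v-1) < v" using parent_less vr by blast
        hence "F!(v-1) \<in> split_cut F s k \<or> (\<exists>w\<in>split_cut F s k. (F!(v-1), w) \<in> reach F)" using less True by blast
        thus ?thesis using e reach_trans by blast
      qed
    qed
  qed
  thus "set (drop k s) \<subseteq> lea_set F (split_cut F s k)" unfolding lea_set_def by blast
qed

lemma split_cut_roo: "roo_set F (split_cut F s k) = set (take k s)"
  unfolding roo_set_def split_cut_lea using take_drop_disjoint take_drop_union by blast

end

end

text \<open>From an admissible cut together with linear extensions \<open>c\<close>, \<open>d\<close> of \<open>Roo\<close> and \<open>Lea\<close>:
  lifting them back to the vertex sets and concatenating gives a linear extension of \<open>F\<close>
  (the roots part comes first since \<open>Roo\<close> is closed under parents).\<close>
lemma cut_word_S_F:
  assumes HO: "F \<in> HO" and cut: "admissible_cut F vs"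
    and c: "c \<in> S_F (restrict_forest F (roo_set F vs))"
    and d: "d \<in> S_F (restrict_forest F (lea_set F vs))"
  shows "unstd (roo_set F vs) c @ unstd (lea_set F vs) d \<in> S_F F"
proof -
  define R where "R = roo_set F vs"
  define L where "L = lea_set F vs"
  define u where "u = unstd R c"
  define w where "w = unstd L d"
  have part: "R \<inter> L = {}" "R \<union> L = {1..length F}"
    using lea_subset[OF HO cut] unfolding R_def L_def roo_set_def by auto
  have fR: "finite R" and fL: "finite L" using part by (metis finite_Un finite_atLeastAtMost)+
  have U: "distinct u" "set u = R" "\<forall>v\<in>R. F!(v-1) \<in> R \<longrightarrow> before u (F!(v-1)) v"
    using unstd_S_F_restrict[OF fR] c unfolding R_def u_def by blast+
  have W: "distinct w" "set w = L" "\<forall>v\<in>L. F!(v-1) \<in> L \<longrightarrow> before w (F!(v-1)) v"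
    using unstd_S_F_restrict[OF fL] d unfolding L_def w_def by blast+
  have ds: "distinct (u @ w)" using U W part by auto
  have ss: "set (u @ w) = {1..length F}" using U W part by auto
  have ls: "length (u @ w) = length F" using distinct_card[OF ds] ss by simp
  have edges: "before (u @ w) (F!(i-1)) i" if i: "i \<in> {1..length F}" "F!(i-1) \<noteq> 0" for i
  proof -
    have pr: "F!(i-1) \<in> {1..length F}" using parent_in_range[OF HO i] .
    consider "i \<in> R" | "i \<in> L" "F!(i-1) \<in> L" | "i \<in> L" "F!(i-1) \<in> R"
      using i pr part by blast
    thus ?thesis
    proof cases
      case 1
      hence "F!(i-1) \<in> R" using roo_parent[OF HO cut] i R_def by blast
      thus ?thesis using U 1 by (blast intro: before_append_leftI)
    next
      case 2 thus ?thesis using W by (blast intro: before_append_rightI)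
    next
      case 3 thus ?thesis using U W by (blast intro: before_appendI)
    qed
  qed
  have "perm_list (u @ w)" using ds ss ls unfolding perm_list_def by simp
  thus ?thesis using S_F_before[OF HO_bound[OF HO]] ls edges unfolding u_def w_def R_def L_def by auto
qed

lemma split_S_F_restrict:
  assumes HO: "F \<in> HO" and sS: "s \<in> S_F F"
  shows "std (take k s) \<in> S_F (restrict_forest F (roo_set F (split_cut F s k)))"
    and "std (drop k s) \<in> S_F (restrict_forest F (lea_set F (split_cut F s k)))"
proof -
  have sp: "set s = {1..length F}" "distinct (take k s @ drop k s)" using S_F_perm[OF HO sS] by auto
  have ed: "before (take k s @ drop k s) (F!(v-1)) v" if "v \<in> set s" "F!(v-1) \<in> set s" for v
    using S_F_edge[OF HO sS] that sp by fastforce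
  show "std (take k s) \<in> S_F (restrict_forest F (roo_set F (split_cut F s k)))"
    unfolding split_cut_roo[OF HO sS]
  proof (rule std_S_F_restrict)
    show "distinct (take k s)" using sp by simp
    show "\<forall>v\<in>set (take k s). F!(v-1) \<in> set (take k s) \<longrightarrow> before (take k s) (F!(v-1)) v"
    proof (intro ballI impI)
      fix v assume v: "v \<in> set (take k s)" "F!(v-1) \<in> set (take k s)"
      hence "before (take k s @ drop k s) (F!(v-1)) v" using ed by (meson in_set_takeD)
      thus "before (take k s) (F!(v-1)) v" using before_append_leftD[OF sp(2)] v by blast
    qed
  qed
  show "std (drop k s) \<in> S_F (restrict_forest F (lea_set F (split_cut F s k)))"
    unfolding split_cut_lea[OF HO sS]
  proof (rule std_S_F_restrict)
    show "distinct (drop k s)" using sp by simp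
    show "\<forall>v\<in>set (drop k s). F!(v-1) \<in> set (drop k s) \<longrightarrow> before (drop k s) (F!(v-1)) v"
    proof (intro ballI impI)
      fix v assume v: "v \<in> set (drop k s)" "F!(v-1) \<in> set (drop k s)"
      hence "before (take k s @ drop k s) (F!(v-1)) v" using ed by (meson in_set_dropD)
      thus "before (drop k s) (F!(v-1)) v" using before_append_rightD[OF sp(2)] v by blast
    qed
  qed
qed

lemma coprod_card:
  assumes HO: "F \<in> HO"
  shows "card {vs. admissible_cut F vs \<and> c \<in> S_F (restrict_forest F (roo_set F vs)) \<and>
                   d \<in> S_F (restrict_forest F (lea_set F vs))} =
         card (SIGMA s:S_F F. {k. k \<le> length s \<and> std (take k s) = c \<and> std (drop k s) = d})"
proof -
  define V where "V = {vs. admissible_cut F vs \<and> c \<in> S_F (restrict_forest F (roo_set F vs)) \<and>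
                   d \<in> S_F (restrict_forest F (lea_set F vs))}"
  define P where "P = (SIGMA s:S_F F. {k. k \<le> length s \<and> std (take k s) = c \<and> std (drop k s) = d})"
  define g where "g vs = (unstd (roo_set F vs) c @ unstd (lea_set F vs) d, card (roo_set F vs))" for vs
  define f where "f sk = split_cut F (fst sk) (snd sk)" for sk :: "nat list \<times> nat"
  have unstd_V: "length (unstd (roo_set F vs) c) = card (roo_set F vs) \<and> std (unstd (roo_set F vs) c) = c \<and>
      set (unstd (lea_set F vs) d) = lea_set F vs \<and> std (unstd (lea_set F vs) d) = d"
    if "vs \<in> V" for vs
  proof -
    have "finite (lea_set F vs)" using lea_subset[OF HO] that V_def finite_subset by blast
    moreover have "finite (roo_set F vs)" unfolding roo_set_def by simp
    ultimately show ?thesis using unstd_S_F_restrict that unfolding V_def by blast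
  qed
  have "bij_betw g V P"
  proof (rule bij_betw_byWitness[where f'=f])
    show "\<forall>vs\<in>V. f (g vs) = vs"
    proof
      fix vs assume vs: "vs \<in> V"
      have "drop (card (roo_set F vs)) (unstd (roo_set F vs) c @ unstd (lea_set F vs) d) =
          unstd (lea_set F vs) d"
        using unstd_V[OF vs] by (metis append_eq_conv_conj)
      hence "f (g vs) = {v \<in> lea_set F vs. F!(v-1) \<notin> lea_set F vs}"
        using unstd_V[OF vs] unfolding f_def g_def split_cut_def by simp
      thus "f (g vs) = vs" using lea_minimal[OF HO] vs V_def by simp
    qed
    show "\<forall>b\<in>P. g (f b) = b"
    proof
      fix b assume b: "b \<in> P"
      obtain s k where sk: "b = (s, k)" by fastforce
      have sS: "s \<in> S_F F" and k: "k \<le> length s" and cd: "std (take k s) = c" "std (drop k s) = d"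
        using b sk P_def by auto
      have "f b = split_cut F s k" unfolding f_def sk by simp
      hence "g (f b) = (unstd (set (take k s)) c @ unstd (set (drop k s)) d, card (set (take k s)))"
        unfolding g_def using split_cut_roo[OF HO sS] split_cut_lea[OF HO sS] by simp
      also have "\<dots> = (take k s @ drop k s, k)"
        using unstd_std distinct_card S_F_perm(2)[OF HO sS] k cd by fastforce
      finally show "g (f b) = b" using sk by simp
    qed
    show "g ` V \<subseteq> P"
      using cut_word_S_F[OF HO] unstd_V unfolding V_def P_def g_def by auto
    show "f ` P \<subseteq> V"
      using split_cut_admissible[OF HO] split_S_F_restrict[OF HO] unfolding V_def P_def f_def by auto
  qed
  thus ?thesis unfolding V_def P_def by (rule bij_betw_same_card)
qed

lemma fiber_sum:
  assumes fV: "finite V" and fX: "finite X" and hV: "h ` V \<subseteq> X"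
  shows "(\<Sum>y\<in>X. of_nat (card {v\<in>V. h v = y}) * (T y :: 'k::comm_ring_1)) = (\<Sum>v\<in>V. T (h v))"
proof -
  have "(\<Sum>y\<in>X. of_nat (card {v\<in>V. h v = y}) * (T y :: 'k)) = (\<Sum>y\<in>X. \<Sum>v\<in>{v\<in>V. h v = y}. T (h v))"
  proof (rule sum.cong[OF refl])
    fix y
    have "(\<Sum>v\<in>{v\<in>V. h v = y}. T (h v)) = (\<Sum>v\<in>{v\<in>V. h v = y}. T y)" by (rule sum.cong) auto
    also have "\<dots> = of_nat (card {v\<in>V. h v = y}) * T y" by (rule sum_constant)
    finally show "of_nat (card {v\<in>V. h v = y}) * T y = (\<Sum>v\<in>{v\<in>V. h v = y}. T (h v))" by simp
  qed
  also have "\<dots> = (\<Sum>v\<in>V. T (h v))" by (rule sum.group[OF fV fX hV])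
  finally show ?thesis .
qed

lemma finite_cuts: "finite {vs. admissible_cut F vs}"
proof -
  have "{vs. admissible_cut F vs} \<subseteq> Pow {1..length F}" unfolding admissible_cut_def by auto
  thus ?thesis using finite_subset by blast
qed

definition cut_pair :: "nat list \<Rightarrow> nat set \<Rightarrow> nat list \<times> nat list" where
  "cut_pair F vs = (restrict_forest F (roo_set F vs), restrict_forest F (lea_set F vs))"

lemma Delta_H_cut_pair:
  "(Delta_H F y :: 'k::comm_ring_1) = of_nat (card {vs \<in> {vs. admissible_cut F vs}. cut_pair F vs = y})"
  unfolding Delta_H_def cut_pair_def by simp

lemma vsupp_Delta_H: "vsupp (Delta_H F :: _ \<Rightarrow> 'k::comm_ring_1) \<subseteq> cut_pair F ` {vs. admissible_cut F vs}"
proof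
  fix y assume "y \<in> vsupp (Delta_H F :: _ \<Rightarrow> 'k)"
  hence "{vs \<in> {vs. admissible_cut F vs}. cut_pair F vs = y} \<noteq> {}"
    unfolding vsupp_def Delta_H_cut_pair by (metis (mono_tags) card.empty mem_Collect_eq of_nat_0)
  thus "y \<in> cut_pair F ` {vs. admissible_cut F vs}" by blast
qed

lemma Delta_H_pairing:
  assumes fX: "finite X" and sub: "cut_pair F ` {vs. admissible_cut F vs} \<subseteq> X"
  shows "(\<Sum>y\<in>X. (Delta_H F y :: 'k::comm_ring_1) * tens Theta Theta y (c, d)) =
    of_nat (card {vs. admissible_cut F vs \<and>
      c \<in> S_F (restrict_forest F (roo_set F vs)) \<and> d \<in> S_F (restrict_forest F (lea_set F vs))})"
proof -
  let ?CU = "{vs. admissible_cut F vs}"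
  have "(\<Sum>y\<in>X. (Delta_H F y :: 'k) * tens Theta Theta y (c, d)) =
      (\<Sum>y\<in>X. of_nat (card {vs\<in>?CU. cut_pair F vs = y}) * tens Theta Theta y (c, d))"
    by (simp add: Delta_H_cut_pair)
  also have "\<dots> = (\<Sum>vs\<in>?CU. tens Theta Theta (cut_pair F vs) (c, d))"
    by (rule fiber_sum[OF finite_cuts fX sub])
  also have "\<dots> = (\<Sum>vs\<in>?CU. if c \<in> S_F (restrict_forest F (roo_set F vs)) \<and>
                   d \<in> S_F (restrict_forest F (lea_set F vs)) then 1 else 0)"
    by (rule sum.cong[OF refl]) (simp add: cut_pair_def tens_def Theta_def)
  also have "\<dots> = of_nat (card {vs\<in>?CU. c \<in> S_F (restrict_forest F (roo_set F vs)) \<and>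
                   d \<in> S_F (restrict_forest F (lea_set F vs))})"
    using finite_cuts by (simp add: sum.inter_filter[symmetric])
  finally show ?thesis by simp
qed

lemma lext_comult_H:
  assumes fA: "finite (vsupp u)"
  shows "lext (tens Theta Theta) (comult_H u :: nat list \<times> nat list \<Rightarrow> 'k::comm_ring_1) (c, d) =
    (\<Sum>F\<in>vsupp u. u F * of_nat (card {vs. admissible_cut F vs \<and>
        c \<in> S_F (restrict_forest F (roo_set F vs)) \<and> d \<in> S_F (restrict_forest F (lea_set F vs))}))"
proof -
  define X where "X = (\<Union>F\<in>vsupp u. cut_pair F ` {vs. admissible_cut F vs})"
  have fX: "finite X" using fA finite_cuts X_def by simp
  have "vsupp (comult_H u :: _ \<Rightarrow> 'k) \<subseteq> (\<Union>F\<in>vsupp u. vsupp (Delta_H F :: _ \<Rightarrow> 'k))"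
    unfolding comult_H_def by (rule vsupp_lext)
  also have "\<dots> \<subseteq> X" using vsupp_Delta_H unfolding X_def by blast
  finally have sX: "vsupp (comult_H u :: _ \<Rightarrow> 'k) \<subseteq> X" .
  have cH: "(comult_H u :: _ \<Rightarrow> 'k) y = (\<Sum>F\<in>vsupp u. u F * Delta_H F y)" for y
    unfolding comult_H_def by (rule lext_eq[OF fA]) simp
  have "lext (tens Theta Theta) (comult_H u :: _ \<Rightarrow> 'k) (c, d) =
      (\<Sum>y\<in>X. comult_H u y * tens Theta Theta y (c, d))"
    by (rule lext_eq[OF fX sX])
  also have "\<dots> = (\<Sum>y\<in>X. \<Sum>F\<in>vsupp u. u F * (Delta_H F y * tens Theta Theta y (c, d)))"
    by (simp add: cH sum_distrib_right mult.assoc)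
  also have "\<dots> = (\<Sum>F\<in>vsupp u. u F * (\<Sum>y\<in>X. Delta_H F y * tens Theta Theta y (c, d)))"
    by (subst sum.swap) (simp add: sum_distrib_left)
  also have "\<dots> = (\<Sum>F\<in>vsupp u. u F * of_nat (card {vs. admissible_cut F vs \<and>
        c \<in> S_F (restrict_forest F (roo_set F vs)) \<and> d \<in> S_F (restrict_forest F (lea_set F vs))}))"
    by (intro sum.cong refl arg_cong2[where f = "(*)"] Delta_H_pairing[OF fX]) (auto simp: X_def)
  finally show ?thesis .
qed

lemma comult_FQ_Theta_lin:
  assumes fA: "finite (vsupp u)"
  shows "comult_FQ (Theta_lin u) (c, d) = (\<Sum>F\<in>vsupp u. u F *
    (of_nat (card (SIGMA s:S_F F. {k. k \<le> length s \<and> std (take k s) = c \<and> std (drop k s) = d})) :: 'k::comm_ring_1))"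
proof -
  obtain N where N: "\<forall>F\<in>vsupp u. length F \<le> N" using finite_bounded_len[OF fA] by blast
  define Q where "Q = PL N"
  have fQ: "finite Q" using finite_PL Q_def by simp
  have sQ: "vsupp (Theta_lin u :: nat list \<Rightarrow> 'k) \<subseteq> Q"
    using Theta_lin_vsupp[of u N] fA N Q_def by auto
  define D where "D s = (Delta_FQ s (c, d) :: 'k)" for s
  have "comult_FQ (Theta_lin u) (c, d) = (\<Sum>s\<in>Q. (Theta_lin u :: nat list \<Rightarrow> 'k) s * D s)"
    unfolding comult_FQ_def D_def by (rule lext_eq[OF fQ sQ])
  also have "\<dots> = (\<Sum>s\<in>Q. \<Sum>F\<in>vsupp u. u F * (Theta F s * D s))"
    using Theta_lin_eq[OF fA, of u] by (simp add: sum_distrib_right mult.assoc)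
  also have "\<dots> = (\<Sum>F\<in>vsupp u. u F * (\<Sum>s\<in>Q. Theta F s * D s))"
    by (subst sum.swap) (simp add: sum_distrib_left)
  also have "\<dots> = (\<Sum>F\<in>vsupp u. u F * (\<Sum>s\<in>S_F F. D s))"
  proof (intro sum.cong refl)
    fix F assume "F \<in> vsupp u"
    hence "S_F F \<subseteq> Q" using S_F_subset_PL N Q_def by auto
    thus "u F * (\<Sum>s\<in>Q. Theta F s * D s) = u F * (\<Sum>s\<in>S_F F. D s)" by (simp add: Theta_sum[OF fQ])
  qed
  also have "\<dots> = (\<Sum>F\<in>vsupp u. u F *
      of_nat (card (SIGMA s:S_F F. {k. k \<le> length s \<and> std (take k s) = c \<and> std (drop k s) = d})))"
    using finite_S_F by (simp add: D_def Delta_FQ_def card_SigmaI)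
  finally show ?thesis .
qed

lemma Theta_comult:
  assumes u: "u \<in> fvecs HO"
  shows "lext (tens Theta Theta) (comult_H u :: nat list \<times> nat list \<Rightarrow> 'k::comm_ring_1) = comult_FQ (Theta_lin u)"
proof
  fix x :: "nat list \<times> nat list"
  obtain c d where x: "x = (c, d)" by fastforce
  show "lext (tens Theta Theta) (comult_H u :: _ \<Rightarrow> 'k) x = comult_FQ (Theta_lin u) x"
    unfolding x lext_comult_H[OF fvecs_finite[OF u]] comult_FQ_Theta_lin[OF fvecs_finite[OF u]]
    using coprod_card fvecs_sub[OF u] by (intro sum.cong refl) auto
qed

section \<open>Bijectivity\<close>

text \<open>Both sides are graded.  \<open>HOn n\<close> and \<open>Pn n\<close> are the bases in degree \<open>n\<close>; a heap-ordered
  forest of size \<open>n+1\<close> is one of size \<open>n\<close> with a new vertex \<open>n+1\<close> attached to some \<open>p \<le> n\<close>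
  (\<open>p = 0\<close>: a new root), and a permutation of size \<open>n+1\<close> is one of size \<open>n\<close> with the letter
  \<open>n+1\<close> inserted after position \<open>m \<le> n\<close>.\<close>
definition HOn :: "nat \<Rightarrow> nat list set" where
  "HOn n = {F\<in>HO. length F = n}"

definition Pn :: "nat \<Rightarrow> nat list set" where
  "Pn n = {s. perm_list s \<and> length s = n}"

definition ins :: "nat list \<Rightarrow> nat \<Rightarrow> nat list" where
  "ins s m = take m s @ [Suc (length s)] @ drop m s"

lemma finite_HOn: "finite (HOn n)"
proof -
  have "HOn n \<subseteq> {xs. set xs \<subseteq> {0..n} \<and> length xs = n}"
    unfolding HOn_def using HO_bound by (auto simp: in_set_conv_nth)
  thus ?thesis using finite_lists_length_eq[of "{0..n}" n] finite_subset by blast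
qed

lemma HOn_0: "HOn 0 = {[]}"
  unfolding HOn_def HO_iff by auto

lemma Pn_0: "Pn 0 = {[]}"
  unfolding Pn_def perm_list_def by auto

lemma HOn_Suc: "HOn (Suc n) = (\<lambda>(G, p). G @ [p]) ` (HOn n \<times> {0..n})"
proof
  show "HOn (Suc n) \<subseteq> (\<lambda>(G, p). G @ [p]) ` (HOn n \<times> {0..n})"
  proof
    fix F assume F: "F \<in> HOn (Suc n)"
    hence l: "length F = Suc n" and h: "\<forall>i<length F. F!i \<le> i" unfolding HOn_def HO_iff by auto
    have ne: "F \<noteq> []" using l by auto
    have e: "F = butlast F @ [last F]" using ne by simp
    have "butlast F \<in> HOn n" unfolding HOn_def HO_iff using l h by (auto simp: nth_butlast)
    moreover have "last F \<le> n" using h l ne by (simp add: last_conv_nth)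
    ultimately show "F \<in> (\<lambda>(G, p). G @ [p]) ` (HOn n \<times> {0..n})" using e by force
  qed
next
  show "(\<lambda>(G, p). G @ [p]) ` (HOn n \<times> {0..n}) \<subseteq> HOn (Suc n)"
  proof
    fix F assume "F \<in> (\<lambda>(G, p). G @ [p]) ` (HOn n \<times> {0..n})"
    then obtain G p where G: "G \<in> HOn n" "p \<le> n" "F = G @ [p]" by auto
    have "\<forall>i<length G. G!i \<le> i" "length G = n" using G unfolding HOn_def HO_iff by auto
    hence "\<forall>i<length F. F!i \<le> i" using G by (auto simp: nth_append less_Suc_eq)
    thus "F \<in> HOn (Suc n)" using G unfolding HOn_def HO_iff by auto
  qed
qed

lemma sum_HOn_Suc: "(\<Sum>F\<in>HOn (Suc n). f F) = (\<Sum>G\<in>HOn n. \<Sum>p\<in>{0..n}. f (G @ [p]))"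
proof -
  have inj: "inj_on (\<lambda>(G, p). G @ [p]) (HOn n \<times> {0..n})" by (auto simp: inj_on_def)
  have "(\<Sum>F\<in>HOn (Suc n). f F) = (\<Sum>x\<in>HOn n \<times> {0..n}. f ((\<lambda>(G, p). G @ [p]) x))"
    unfolding HOn_Suc using sum.reindex[OF inj, of f] by (simp add: o_def)
  also have "\<dots> = (\<Sum>G\<in>HOn n. \<Sum>p\<in>{0..n}. f (G @ [p]))"
    by (simp add: sum.cartesian_product case_prod_beta)
  finally show ?thesis .
qed

lemma ins_Pn: assumes "s \<in> Pn n" "m \<le> n" shows "ins s m \<in> Pn (Suc n)"
proof -
  have s: "distinct s" "set s = {1..n}" "length s = n" using assms unfolding Pn_def perm_list_def by auto
  have "Suc n \<notin> set s" using s by auto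
  have g1: "distinct (a @ [x] @ b)" if "distinct (a @ b)" "x \<notin> set (a @ b)" for a b and x :: nat
    using that by auto
  have g2: "set (a @ [x] @ b) = insert x (set (a @ b))" for a b and x :: nat by auto
  have A: "distinct (take m s @ drop m s)" "Suc n \<notin> set (take m s @ drop m s)"
    using s \<open>Suc n \<notin> set s\<close> by (simp_all only: append_take_drop_id) simp_all
  have "distinct (ins s m)" unfolding ins_def using g1[OF A] s(3) by simp
  moreover have "set (ins s m) = insert (Suc n) {1..n}"
    unfolding ins_def using g2[of "take m s" "Suc n" "drop m s"] s by simp
  moreover have "insert (Suc n) {1..n} = {1..Suc n}" by auto
  moreover have "length (ins s m) = Suc n" using s assms unfolding ins_def by simp
  ultimately show ?thesis unfolding Pn_def perm_list_def by simp
qed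

lemma Pn_Suc_decomp:
  assumes "t \<in> Pn (Suc n)"
  shows "\<exists>s m. s \<in> Pn n \<and> m \<le> n \<and> t = ins s m"
proof -
  have t: "distinct t" "set t = {1..Suc n}" "length t = Suc n" using assms unfolding Pn_def perm_list_def by auto
  have "Suc n \<in> set t" using t by simp
  then obtain m where m: "m < length t" "t!m = Suc n" by (meson in_set_conv_nth)
  define a where "a = take m t"
  define b where "b = drop (Suc m) t"
  define s where "s = a @ b"
  have td: "t = a @ [Suc n] @ b" using id_take_nth_drop[OF m(1)] m(2) a_def b_def by simp
  have d3: "distinct (a @ [Suc n] @ b)" using t(1) by (simp only: td[symmetric])
  have s3: "set (a @ [Suc n] @ b) = {1..Suc n}" using t(2) by (simp only: td[symmetric])
  have ds: "distinct s" and ns: "Suc n \<notin> set s" using d3 s_def by auto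
  have ls: "length s = n" using m t s_def a_def b_def by simp
  have "set s \<subseteq> {1..Suc n}" using s3 s_def by auto
  hence "set s \<subseteq> {1..n}" using ns by (auto simp: le_Suc_eq)
  hence "s \<in> Pn n" using perm_listI[OF ds] ls unfolding Pn_def by simp
  moreover have "m \<le> n" using m t by simp
  moreover have "ins s m = t"
  proof -
    have la: "length a = m" using a_def m by simp
    have "take m s = a" "drop m s = b" using la s_def by auto
    thus ?thesis unfolding ins_def using ls td by simp
  qed
  ultimately show ?thesis by blast
qed

lemma before_ins_old:
  assumes s: "s \<in> Pn n" and x: "x \<noteq> Suc n" and y: "y \<noteq> Suc n"
  shows "before (ins s m) x y \<longleftrightarrow> before s x y"
proof -
  have "Suc n \<notin> set s" using s unfolding Pn_def perm_list_def by auto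
  hence "filter (\<lambda>x. x \<noteq> Suc n) (take m s) = take m s" "filter (\<lambda>x. x \<noteq> Suc n) (drop m s) = drop m s"
    by (auto intro!: filter_True dest: in_set_takeD in_set_dropD)
  hence "filter (\<lambda>x. x \<noteq> Suc n) (ins s m) = s"
    using s unfolding ins_def Pn_def by simp
  thus ?thesis using before_filter_iff[of "\<lambda>x. x \<noteq> Suc n" "ins s m" x y] x y by simp
qed

lemma before_ins_new:
  assumes s: "s \<in> Pn n" and m: "m \<le> n" and p: "p \<in> set s"
  shows "before (ins s m) p (Suc n) \<longleftrightarrow> p \<in> set (take m s)"
proof
  have ls: "length s = n" using s unfolding Pn_def by simp
  assume b: "before (ins s m) p (Suc n)"
  show "p \<in> set (take m s)"
  proof (rule ccontr)
    assume "p \<notin> set (take m s)"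
    hence "p \<in> set (drop m s)" using p by (metis Un_iff append_take_drop_id set_append)
    hence "before (ins s m) (Suc n) p"
      unfolding ins_def ls by (metis append_assoc before_appendI in_set_conv_decomp append_Cons append_Nil)
    moreover have "distinct (ins s m)" using ins_Pn[OF s m] unfolding Pn_def perm_list_def by simp
    ultimately show False using b before_asym by blast
  qed
next
  assume "p \<in> set (take m s)"
  thus "before (ins s m) p (Suc n)" using s unfolding ins_def Pn_def by (intro before_appendI) auto
qed

lemma Theta_ins:
  assumes G: "G \<in> HOn n" and s: "s \<in> Pn n" and p: "p \<le> n" and m: "m \<le> n"
  shows "(Theta (G @ [p]) (ins s m) :: 'k::comm_ring_1) =
    Theta G s * (if p = 0 \<or> p \<in> set (take m s) then 1 else 0)"
proof -
  have GH: "G \<in> HO" "length G = n" using G unfolding HOn_def by auto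
  have GpH: "G @ [p] \<in> HO" using HOn_Suc[of n] G p unfolding HOn_def by force
  have sp: "perm_list s" "length s = n" "set s = {1..n}" using s unfolding Pn_def perm_list_def by auto
  have tp: "perm_list (ins s m)" "length (ins s m) = Suc n" using ins_Pn[OF s m] unfolding Pn_def by auto
  have edge: "(1 \<le> i \<and> i \<le> Suc n \<and> (G @ [p])!(i-1) \<noteq> 0 \<longrightarrow> before (ins s m) ((G @ [p])!(i-1)) i) \<longleftrightarrow>
      (1 \<le> i \<and> i \<le> n \<and> G!(i-1) \<noteq> 0 \<longrightarrow> before s (G!(i-1)) i) \<and>
      (i = Suc n \<longrightarrow> p \<noteq> 0 \<longrightarrow> p \<in> set (take m s))" for i
  proof (cases "1 \<le> i \<and> i \<le> n")
    case True
    hence "i - 1 < length G" using GH by arith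
    hence "(G @ [p])!(i-1) = G!(i-1)" "G!(i-1) \<le> n" using HO_bound[OF GH(1)] GH by (auto simp: nth_append)
    thus ?thesis using True before_ins_old[OF s, of "G!(i-1)" i m] by auto
  next
    case False
    thus ?thesis using before_ins_new[OF s m, of p] GH p sp by (cases "i = Suc n") (auto simp: nth_append)
  qed
  have "ins s m \<in> S_F (G @ [p]) \<longleftrightarrow>
      (\<forall>i. 1 \<le> i \<and> i \<le> Suc n \<and> (G @ [p])!(i-1) \<noteq> 0 \<longrightarrow> before (ins s m) ((G @ [p])!(i-1)) i)"
    using S_F_before[OF HO_bound[OF GpH]] tp GH by simp
  also have "\<dots> \<longleftrightarrow> s \<in> S_F G \<and> (p = 0 \<or> p \<in> set (take m s))"
    unfolding edge using S_F_before[OF HO_bound[OF GH(1)]] sp GH by auto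
  finally show ?thesis unfolding Theta_def by auto
qed

text \<open>\<open>\<Theta>\<close> in degree \<open>n\<close>, as a map on coefficient functions.\<close>
definition Phi :: "nat \<Rightarrow> (nat list \<Rightarrow> 'k::comm_ring_1) \<Rightarrow> nat list \<Rightarrow> 'k" where
  "Phi n u s = (\<Sum>G\<in>HOn n. u G * Theta G s)"

lemma Phi_ins:
  assumes s: "s \<in> Pn n" and m: "m \<le> n"
  shows "Phi (Suc n) u (ins s m) = (\<Sum>p\<in>insert 0 (set (take m s)). Phi n (\<lambda>G. u (G @ [p])) s)"
proof -
  have sub: "insert 0 (set (take m s)) \<subseteq> {0..n}"
    using s unfolding Pn_def perm_list_def by (auto dest: in_set_takeD)
  have "Phi (Suc n) u (ins s m) = (\<Sum>G\<in>HOn n. \<Sum>p\<in>{0..n}. u (G @ [p]) * Theta (G @ [p]) (ins s m))"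
    unfolding Phi_def by (rule sum_HOn_Suc)
  also have "\<dots> = (\<Sum>p\<in>{0..n}. \<Sum>G\<in>HOn n. if p \<in> insert 0 (set (take m s)) then u (G @ [p]) * Theta G s else 0)"
    by (subst sum.swap) (intro sum.cong refl; simp add: Theta_ins[OF _ s _ m])
  also have "\<dots> = (\<Sum>p\<in>{0..n}. if p \<in> insert 0 (set (take m s)) then Phi n (\<lambda>G. u (G @ [p])) s else 0)"
    unfolding Phi_def by (intro sum.cong refl) simp
  also have "\<dots> = (\<Sum>p\<in>{p\<in>{0..n}. p \<in> insert 0 (set (take m s))}. Phi n (\<lambda>G. u (G @ [p])) s)"
    by (rule sum.inter_filter[symmetric]) simp
  also have "{p\<in>{0..n}. p \<in> insert 0 (set (take m s))} = insert 0 (set (take m s))" using sub by blast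
  finally show ?thesis .
qed

lemma prefix_sum_Suc:
  assumes s: "s \<in> Pn n" and m: "m < n"
  shows "(\<Sum>p\<in>insert 0 (set (take (Suc m) s)). f p) = f (s!m) + (\<Sum>p\<in>insert 0 (set (take m s)). f p)"
proof -
  have sp: "distinct s" "set s = {1..n}" "length s = n" using s unfolding Pn_def perm_list_def by auto
  have "take (Suc m) s = take m s @ [s!m]" using m sp by (simp add: take_Suc_conv_app_nth)
  moreover have "s!m \<notin> set (take m s)" using sp m by (simp add: in_set_conv_nth nth_eq_iff_index_eq)
  moreover have "s!m \<noteq> 0" using sp m nth_mem[of m s] by force
  ultimately have "insert 0 (set (take (Suc m) s)) = insert (s!m) (insert 0 (set (take m s)))"
    "s!m \<notin> insert 0 (set (take m s))" by auto
  thus ?thesis by simp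
qed

lemma prefix_sum_telescope:
  assumes s: "s \<in> Pn n" and m: "m \<le> n"
  shows "(\<Sum>p\<in>insert 0 (set (take m s)). if p = 0 then t 0 else t (pos s p) - t (pos s p - 1)) =
    (t m :: 'k::comm_ring_1)"
  using m
proof (induction m)
  case 0 show ?case by simp
next
  case (Suc m)
  hence m: "m < n" by simp
  have "pos s (s!m) = Suc m" using pos_nth s m unfolding Pn_def perm_list_def by simp
  moreover have "s!m \<noteq> 0" using s m nth_mem[of m s] unfolding Pn_def perm_list_def by force
  moreover have "(\<Sum>p\<in>insert 0 (set (take (Suc m) s)). if p = 0 then t 0 else t (pos s p) - t (pos s p - 1)) =
      (if s!m = 0 then t 0 else t (pos s (s!m)) - t (pos s (s!m) - 1)) +
      (\<Sum>p\<in>insert 0 (set (take m s)). if p = 0 then t 0 else t (pos s p) - t (pos s p - 1))"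
    by (rule prefix_sum_Suc[OF s m])
  ultimately show ?case using Suc m by simp
qed

text \<open>Injectivity in each degree, by induction on \<open>n\<close>: the coefficient functions
  \<open>v_p = Phi n (u(_ @ [p]))\<close> have all prefix sums zero, hence vanish, and the induction
  hypothesis applies to each of them.\<close>
lemma Phi_inj: "\<forall>u. (\<forall>s\<in>Pn n. (Phi n u s :: 'k::comm_ring_1) = 0) \<longrightarrow> (\<forall>G\<in>HOn n. u G = 0)"
proof (induction n)
  case 0
  show ?case
  proof (intro allI impI)
    fix u :: "nat list \<Rightarrow> 'k" assume "\<forall>s\<in>Pn 0. Phi 0 u s = 0"
    hence "Phi 0 u [] = 0" using Pn_0 by simp
    thus "\<forall>G\<in>HOn 0. u G = 0" unfolding Phi_def HOn_0 by (simp add: Theta_def S_F_Nil)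
  qed
next
  case (Suc n)
  show ?case
  proof (intro allI impI)
    fix u :: "nat list \<Rightarrow> 'k" assume h: "\<forall>s\<in>Pn (Suc n). Phi (Suc n) u s = 0"
    define v where "v p s = Phi n (\<lambda>G. u (G @ [p])) s" for p s
    have W: "(\<Sum>p\<in>insert 0 (set (take m s)). v p s) = 0" if "s \<in> Pn n" "m \<le> n" for s m
    proof -
      have "0 = Phi (Suc n) u (ins s m)" using h ins_Pn[OF that] by simp
      also have "\<dots> = (\<Sum>p\<in>insert 0 (set (take m s)). v p s)" unfolding v_def by (rule Phi_ins[OF that])
      finally show ?thesis by simp
    qed
    have V: "v p s = 0" if p: "p \<in> {0..n}" and s: "s \<in> Pn n" for p s
    proof (cases "p = 0")
      case True thus ?thesis using W[OF s, of 0] by simp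
    next
      case False
      hence "p \<in> set s" using p s unfolding Pn_def perm_list_def by auto
      then obtain m where m: "m < n" "s!m = p" using s unfolding Pn_def by (auto simp: in_set_conv_nth)
      have "(\<Sum>q\<in>insert 0 (set (take (Suc m) s)). v q s) = v (s!m) s + (\<Sum>q\<in>insert 0 (set (take m s)). v q s)"
        by (rule prefix_sum_Suc[OF s m(1)])
      thus ?thesis using W[OF s, of m] W[OF s, of "Suc m"] m by simp
    qed
    have "\<forall>G\<in>HOn n. u (G @ [p]) = 0" if p: "p \<in> {0..n}" for p
      using Suc.IH[rule_format, of "\<lambda>G. u (G @ [p])"] V[OF p] v_def by auto
    thus "\<forall>G\<in>HOn (Suc n). u G = 0" unfolding HOn_Suc by auto
  qed
qed

text \<open>Surjectivity in each degree, by induction on \<open>n\<close>: the target values along the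
  insertions of the new letter are telescoping sums of the required \<open>v_p\<close>.\<close>
lemma Phi_surj: "\<forall>w. \<exists>u. \<forall>s\<in>Pn n. (Phi n u s :: 'k::comm_ring_1) = w s"
proof (induction n)
  case 0
  show ?case
  proof
    fix w :: "nat list \<Rightarrow> 'k"
    show "\<exists>u. \<forall>s\<in>Pn 0. Phi 0 u s = w s"
      by (rule exI[of _ "\<lambda>G. w []"]) (simp add: Pn_0 Phi_def HOn_0 Theta_def S_F_Nil)
  qed
next
  case (Suc n)
  show ?case
  proof
    fix w :: "nat list \<Rightarrow> 'k"
    define t where "t s m = w (ins s m)" for s m
    define v where "v p s = (if p = 0 then t s 0 else t s (pos s p) - t s (pos s p - 1))" for p s
    have "\<forall>p. \<exists>up. \<forall>s\<in>Pn n. (Phi n up s :: 'k) = v p s" using Suc.IH by blast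
    then obtain U where U: "\<forall>p. \<forall>s\<in>Pn n. (Phi n (U p) s :: 'k) = v p s" by metis
    define u where "u G = U (last G) (butlast G)" for G
    have "Phi (Suc n) u r = w r" if r: "r \<in> Pn (Suc n)" for r
    proof -
      obtain s m where sm: "s \<in> Pn n" "m \<le> n" "r = ins s m" using Pn_Suc_decomp[OF r] by blast
      have "Phi (Suc n) u r = (\<Sum>p\<in>insert 0 (set (take m s)). Phi n (\<lambda>G. u (G @ [p])) s)"
        using Phi_ins[OF sm(1,2)] sm(3) by simp
      also have "\<dots> = (\<Sum>p\<in>insert 0 (set (take m s)). v p s)"
        using U sm(1) by (simp add: u_def)
      also have "\<dots> = w r" using prefix_sum_telescope[OF sm(1,2), of "t s"] sm t_def by (simp add: v_def)
      finally show ?thesis .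
    qed
    thus "\<exists>u. \<forall>s\<in>Pn (Suc n). Phi (Suc n) u s = w s" by blast
  qed
qed

lemma Theta_lin_Phi:
  assumes u: "u \<in> fvecs HO" and s: "s \<in> Pn n"
  shows "(Theta_lin u :: nat list \<Rightarrow> 'k::comm_ring_1) s = Phi n u s"
proof -
  define A where "A = vsupp u \<union> HOn n"
  have fA: "finite A" using fvecs_finite[OF u] finite_HOn A_def by simp
  have "Theta_lin u s = (\<Sum>F\<in>A. u F * Theta F s)" by (rule Theta_lin_eq[OF fA]) (simp add: A_def)
  also have "\<dots> = (\<Sum>F\<in>HOn n. u F * Theta F s)"
  proof (rule sum.mono_neutral_right[OF fA])
    show "HOn n \<subseteq> A" using A_def by blast
    show "\<forall>F\<in>A - HOn n. u F * Theta F s = 0"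
    proof
      fix F assume "F \<in> A - HOn n"
      hence "F \<in> HO" "length F \<noteq> n" using fvecs_sub[OF u] A_def HOn_def by auto
      hence "s \<notin> S_F F" using s unfolding Pn_def S_F_def by auto
      thus "u F * Theta F s = 0" by (simp add: Theta_def)
    qed
  qed
  finally show ?thesis unfolding Phi_def .
qed

lemma Theta_lin_inj: "inj_on (Theta_lin :: (nat list \<Rightarrow> 'k::comm_ring_1) \<Rightarrow> _) (fvecs HO)"
proof (rule inj_onI)
  fix u u' :: "nat list \<Rightarrow> 'k"
  assume u: "u \<in> fvecs HO" and u': "u' \<in> fvecs HO" and eq: "Theta_lin u = Theta_lin u'"
  show "u = u'"
  proof
    fix G
    show "u G = u' G"
    proof (cases "G \<in> HO")
      case False
      hence "u G = 0" "u' G = 0" using fvecs_sub[OF u] fvecs_sub[OF u'] unfolding vsupp_def by blast+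
      thus ?thesis by simp
    next
      case True
      define n where "n = length G"
      have "Phi n (\<lambda>F. u F - u' F) s = Phi n u s - Phi n u' s" for s
        unfolding Phi_def by (simp add: left_diff_distrib sum_subtractf)
      hence "\<forall>s\<in>Pn n. Phi n (\<lambda>F. u F - u' F) s = 0"
        using Theta_lin_Phi[OF u] Theta_lin_Phi[OF u'] eq by simp
      hence "\<forall>F\<in>HOn n. u F - u' F = 0" using Phi_inj[of n] by blast
      thus ?thesis using True n_def HOn_def by simp
    qed
  qed
qed

lemma Theta_lin_image: "(Theta_lin :: (nat list \<Rightarrow> 'k::comm_ring_1) \<Rightarrow> _) ` fvecs HO \<subseteq> fvecs FQ"
proof
  fix x assume "x \<in> (Theta_lin :: (nat list \<Rightarrow> 'k) \<Rightarrow> _) ` fvecs HO"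
  then obtain u where u: "u \<in> fvecs HO" "x = Theta_lin u" by blast
  obtain N where N: "\<forall>F\<in>vsupp u. length F \<le> N" using finite_bounded_len fvecs_finite[OF u(1)] by blast
  have "vsupp x \<subseteq> PL N" using Theta_lin_vsupp[OF fvecs_finite[OF u(1)] N] u by simp
  moreover have "PL N \<subseteq> FQ" unfolding PL_def FQ_def by auto
  ultimately show "x \<in> fvecs FQ" unfolding fvecs_def using finite_PL finite_subset by blast
qed

text \<open>A preimage of \<open>w\<close> is assembled degree by degree; only finitely many degrees occur.\<close>
lemma Theta_lin_surj: "fvecs FQ \<subseteq> (Theta_lin :: (nat list \<Rightarrow> 'k::comm_ring_1) \<Rightarrow> _) ` fvecs HO"
proof
  fix w :: "nat list \<Rightarrow> 'k" assume w: "w \<in> fvecs FQ"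
  obtain N where N: "\<forall>s\<in>vsupp w. length s \<le> N" using finite_bounded_len fvecs_finite[OF w] by blast
  have "\<forall>n. \<exists>un. \<forall>s\<in>Pn n. (Phi n un s :: 'k) = w s" using Phi_surj by blast
  then obtain U where U: "\<forall>n. \<forall>s\<in>Pn n. (Phi n (U n) s :: 'k) = w s" by metis
  define u where "u F = (if F \<in> HO \<and> length F \<le> N then U (length F) F else 0)" for F
  define A where "A = (\<Union>n\<in>{0..N}. HOn n)"
  have fA: "finite A" using finite_HOn A_def by simp
  have sA: "vsupp u \<subseteq> A" unfolding vsupp_def u_def A_def HOn_def by auto
  have "vsupp u \<subseteq> HO" unfolding vsupp_def u_def by (auto split: if_splits)
  moreover have "finite (vsupp u)" using sA fA finite_subset by blast
  ultimately have uH: "u \<in> fvecs HO" unfolding fvecs_def by blast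
  have "Theta_lin u s = w s" for s
  proof (cases "perm_list s")
    case False
    have "Theta_lin u s = (\<Sum>F\<in>A. u F * Theta F s)" by (rule Theta_lin_eq[OF fA sA])
    also have "\<dots> = 0" using False by (simp add: Theta_def S_F_def)
    finally show ?thesis using False fvecs_sub[OF w] unfolding vsupp_def FQ_def by auto
  next
    case True
    define n where "n = length s"
    have sP: "s \<in> Pn n" using True n_def Pn_def by simp
    show ?thesis
    proof (cases "n \<le> N")
      case True
      have "Phi n u s = Phi n (U n) s" unfolding Phi_def
        by (rule sum.cong[OF refl]) (use True in \<open>simp add: u_def HOn_def\<close>)
      thus ?thesis using Theta_lin_Phi[OF uH sP] U sP by simp
    next
      case False
      have "Phi n u s = 0" unfolding Phi_def
        by (rule sum.neutral) (use False in \<open>auto simp: u_def HOn_def\<close>)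
      moreover have "w s = 0" using N False n_def unfolding vsupp_def by force
      ultimately show ?thesis using Theta_lin_Phi[OF uH sP] by simp
    qed
  qed
  hence "Theta_lin u = w" by (rule ext)
  thus "w \<in> (Theta_lin :: (nat list \<Rightarrow> 'k) \<Rightarrow> _) ` fvecs HO" using uH by blast
qed

theorem mainTheorem7:
  shows "bij_betw (Theta_lin :: (nat list \<Rightarrow> 'k::real_normed_field) \<Rightarrow> _) (fvecs HO) (fvecs FQ)
    \<and> (\<forall>F\<in>HO. \<forall>s. (Theta F s :: 'k) \<noteq> 0 \<longrightarrow> length s = length F)
    \<and> Theta_lin (delta [] :: nat list \<Rightarrow> 'k) = delta []
    \<and> (\<forall>u\<in>fvecs HO. \<forall>v\<in>fvecs HO.
          Theta_lin (mult_H u v :: nat list \<Rightarrow> 'k) = mult_FQ (Theta_lin u) (Theta_lin v))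
    \<and> (\<forall>u\<in>fvecs HO.
          lext (tens Theta Theta) (comult_H u :: nat list \<times> nat list \<Rightarrow> 'k) = comult_FQ (Theta_lin u))
    \<and> (\<forall>u\<in>fvecs HO. counit (Theta_lin u :: nat list \<Rightarrow> 'k) = counit u)"
proof (intro conjI ballI allI impI)
  show "bij_betw (Theta_lin :: (nat list \<Rightarrow> 'k) \<Rightarrow> _) (fvecs HO) (fvecs FQ)"
    unfolding bij_betw_def using Theta_lin_inj Theta_lin_image Theta_lin_surj by blast
next
  fix F s assume "(Theta F s :: 'k) \<noteq> 0"
  thus "length s = length F" by (rule Theta_length)
next
  show "Theta_lin (delta [] :: nat list \<Rightarrow> 'k) = delta []" by (rule Theta_unit)
next
  fix u v :: "nat list \<Rightarrow> 'k" assume "u \<in> fvecs HO" "v \<in> fvecs HO"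
  thus "Theta_lin (mult_H u v) = mult_FQ (Theta_lin u) (Theta_lin v)" by (rule Theta_mult)
next
  fix u :: "nat list \<Rightarrow> 'k" assume "u \<in> fvecs HO"
  thus "lext (tens Theta Theta) (comult_H u :: nat list \<times> nat list \<Rightarrow> 'k) = comult_FQ (Theta_lin u)"
    by (rule Theta_comult)
next
  fix u :: "nat list \<Rightarrow> 'k" assume "u \<in> fvecs HO"
  thus "counit (Theta_lin u :: nat list \<Rightarrow> 'k) = counit u" by (rule Theta_counit)
qed

end
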